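(* Let $g$ be a probability density on $\mathbb R$, $W_1,\dots,W_n$ independent standard Brownian motions on $[0,1]$, and $f\in L^2([0,1])$ extended 1-periodically to $\mathbb R$. Then for every $\alpha>0$, $$\mathbb P\Big(\frac12\sum_{i=1}^n\int_{\mathbb R}g(\tau)\Big[\int_0^1f(t-\tau)\,dW_i(t)\Big]^2d\tau-\frac n2\|f\|^2\ge\alpha\Big)\le\exp\Big(\frac{-\alpha^2}{n\|f\|^4+2\alpha\|f\|^2}\Big).$$
   Context: $\|f\|^2=\int_0^1|f(x)|^2dx$. The stochastic integrals are Itô integrals with respect to $W_i$. *)

theory Defs
  imports "HOL-Probability.Probability"
begin

definition std_brownian_motion :: "'a measure \<Rightarrow> (real \<Rightarrow> 'a \<Rightarrow> real) \<Rightarrow> bool" where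
  "std_brownian_motion M W \<longleftrightarrow>
     prob_space M \<and>
     (\<forall>t\<in>{0..1}. W t \<in> borel_measurable M) \<and>
     (AE \<omega> in M. W 0 \<omega> = 0) \<and>
     (AE \<omega> in M. continuous_on {0..1} (\<lambda>t. W t \<omega>)) \<and>
     (\<forall>s t. 0 \<le> s \<longrightarrow> s < t \<longrightarrow> t \<le> 1 \<longrightarrow>
        distributed M lborel (\<lambda>\<omega>. W t \<omega> - W s \<omega>) (normal_density 0 (sqrt (t - s)))) \<and>
     (\<forall>ts :: real list. sorted_wrt (<) ts \<longrightarrow> set ts \<subseteq> {0..1} \<longrightarrow>
        prob_space.indep_vars M (\<lambda>_. borel) (\<lambda>k \<omega>. W (ts ! Suc k) \<omega> - W (ts ! k) \<omega>)
          {..<length ts - 1})"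

definition step_fun :: "(real \<times> real \<times> real) list \<Rightarrow> real \<Rightarrow> real" where
  "step_fun d t = (\<Sum>(c, a, b)\<leftarrow>d. c * indicator {a<..b} t)"

definition step_int :: "(real \<Rightarrow> 'a \<Rightarrow> real) \<Rightarrow> (real \<times> real \<times> real) list \<Rightarrow> 'a \<Rightarrow> real" where
  "step_int W d \<omega> = (\<Sum>(c, a, b)\<leftarrow>d. c * (W b \<omega> - W a \<omega>))"

text \<open>X is (a version of) the Ito integral of the deterministic L2 integrand h over [0,1]
  w.r.t. W: the L2(M)-limit of the stochastic integrals of step functions approximating h
  in L2[0,1].\<close>
definition is_ito_integral ::
    "'a measure \<Rightarrow> (real \<Rightarrow> 'a \<Rightarrow> real) \<Rightarrow> (real \<Rightarrow> real) \<Rightarrow> ('a \<Rightarrow> real) \<Rightarrow> bool" where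
  "is_ito_integral M W h X \<longleftrightarrow>
     X \<in> borel_measurable M \<and>
     (\<exists>d :: nat \<Rightarrow> (real \<times> real \<times> real) list.
        (\<forall>k. \<forall>(c, a, b) \<in> set (d k). 0 \<le> a \<and> a \<le> b \<and> b \<le> 1) \<and>
        ((\<lambda>k. \<integral>\<^sup>+ t. ennreal (indicator {0..1} t * (step_fun (d k) t - h t)\<^sup>2) \<partial>lborel)
            \<longlonglongrightarrow> 0) \<and>
        ((\<lambda>k. \<integral>\<^sup>+ \<omega>. ennreal ((step_int W (d k) \<omega> - X \<omega>)\<^sup>2) \<partial>M) \<longlonglongrightarrow> 0))"

end

theory Submission
  imports Defs
begin

(*
  Write S = \<integral>\<^sub>0\<^sup>1 f\<^sup>2 and Q(\<tau>) = \<Sum>\<^sub>i X\<^sub>i(\<tau>)\<^sup>2 with X\<^sub>i(\<tau>) = \<integral>\<^sub>0\<^sup>1 f(t - \<tau>) dW\<^sub>i(t).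
  The proof is a Chernoff argument in three layers.
  (1) Gaussian layer: the Ito integral of a step function is a centred Gaussian whose
      variance is the squared L2-norm of the step function, so E exp(\<mu> Y\<^sup>2) = (1 - 2\<mu>V)^(-1/2).
  (2) Limit layer: approximating f(. - \<tau>) by step functions, independence of the Brownian
      motions factorises the moment generating function of Q(\<tau>), an almost surely convergent
      subsequence and Fatou's lemma give E exp(\<mu> Q(\<tau>)) \<le> (1 - 2\<mu>S)^(-n/2) for every \<tau>
      (periodicity of f makes the L2-norm of f(. - \<tau>) independent of \<tau>).
  (3) Mixture layer: Jensen's inequality for the probability density g, Tonelli and
      Markov's inequality bound the probability that \<integral> g Q \<ge> t by e^(-\<mu>t)(1 - 2\<mu>S)^(-n/2).
  The theorem follows by choosing \<mu> optimally and the elementary bound ln x \<le> (x - 1/x)/2.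
*)

lemma ln_le_half: fixes x :: real assumes "1 \<le> x" shows "ln x \<le> (x - 1/x) / 2"
proof -
  let ?f = "\<lambda>y::real. (y - 1/y) / 2 - ln y"
  have "?f 1 \<le> ?f x"
  proof (rule DERIV_nonneg_imp_nondecreasing[OF assms])
    fix y :: real assume y: "1 \<le> y" "y \<le> x"
    have "DERIV ?f y :> (1 - (- (1 / y\<^sup>2))) / 2 - 1 / y"
      using y by (auto intro!: derivative_eq_intros simp: power2_eq_square)
    moreover have "(1 - (- (1 / y\<^sup>2))) / 2 - 1 / y = (y - 1)\<^sup>2 / (2 * y\<^sup>2)"
      using y by (simp add: field_simps power2_eq_square)
    ultimately show "\<exists>d. DERIV ?f y :> d \<and> d \<ge> 0" by auto
  qed
  then show ?thesis by simp
qed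

lemma chernoff_exponent:
  fixes n :: nat and S \<alpha> :: real
  assumes n: "0 < n" and S: "0 < S" and \<alpha>: "0 < \<alpha>"
  defines "\<theta> \<equiv> 2 * \<alpha> / (real n * S\<^sup>2 + 2 * \<alpha> * S)"
  shows "0 \<le> \<theta>" "\<theta> * S < 1"
    "exp (- \<theta> * (\<alpha> + real n * S / 2)) * (1 / sqrt (1 - \<theta> * S)) ^ n
       \<le> exp (- \<alpha>\<^sup>2 / (real n * S\<^sup>2 + 2 * \<alpha> * S))"
proof -
  define D where "D = real n * S\<^sup>2 + 2 * \<alpha> * S"
  have nS: "0 < real n * S\<^sup>2" using n S by simp
  have D: "0 < D" using nS S \<alpha> unfolding D_def by (simp add: add_pos_pos)
  have lam: "\<theta> = 2 * \<alpha> / D" by (simp add: \<theta>_def D_def)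
  show "0 \<le> \<theta>" using D \<alpha> by (simp add: lam)
  have "1 - \<theta> * S = (D - 2 * \<alpha> * S) / D" using D by (simp add: lam field_simps)
  also have "D - 2 * \<alpha> * S = real n * S\<^sup>2" by (simp add: D_def)
  finally have q: "1 - \<theta> * S = real n * S\<^sup>2 / D" .
  have "0 < real n * S\<^sup>2 / D" using nS D by simp
  then show "\<theta> * S < 1" using q by linarith
  define x where "x = D / (real n * S\<^sup>2)"
  have x1: "1 \<le> x" unfolding x_def using nS S \<alpha> by (subst le_divide_eq_1_pos) (auto simp: D_def)
  have sx: "1 / sqrt (1 - \<theta> * S) = sqrt x" unfolding q x_def using nS D
    by (simp add: real_sqrt_divide)
  have "sqrt x ^ n = exp (real n * (ln x / 2))"
  proof -
    have "sqrt x = exp (ln x / 2)" using x1 powr_half_sqrt[of x] by (simp add: powr_def)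
    then show ?thesis by (simp add: exp_of_nat_mult[symmetric])
  qed
  then have "exp (- \<theta> * (\<alpha> + real n * S / 2)) * (1 / sqrt (1 - \<theta> * S)) ^ n
      = exp (- \<theta> * (\<alpha> + real n * S / 2) + real n * (ln x / 2))" by (simp add: sx mult_exp_exp)
  also have "\<dots> \<le> exp (- \<theta> * (\<alpha> + real n * S / 2) + real n * ((x - 1/x) / 4))"
    using ln_le_half[OF x1] n by simp
  also have "- \<theta> * (\<alpha> + real n * S / 2) + real n * ((x - 1/x) / 4) = - \<alpha>\<^sup>2 / D"
  proof -
    have N: "real n \<noteq> 0" "S \<noteq> 0" "D \<noteq> 0" using n S D by auto
    have D': "D = real n * S\<^sup>2 + 2 * \<alpha> * S" by (simp add: D_def)
    show ?thesis unfolding lam x_def using N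
      by (simp add: field_simps power2_eq_square) (simp add: D' algebra_simps power2_eq_square)
  qed
  finally show "exp (- \<theta> * (\<alpha> + real n * S / 2)) * (1 / sqrt (1 - \<theta> * S)) ^ n
       \<le> exp (- \<alpha>\<^sup>2 / (real n * S\<^sup>2 + 2 * \<alpha> * S))" by (simp add: D_def)
qed

text \<open>Two-sided comparison of s^2 and h^2 in terms of (s - h)^2, with a weight \<epsilon> > 0 on h^2;
  it yields continuity of the L2-norm.\<close>
lemma sq_compare: fixes s h \<epsilon> :: real assumes "0 < \<epsilon>"
  shows "s\<^sup>2 \<le> h\<^sup>2 + \<epsilon> * h\<^sup>2 + (1 + 1/\<epsilon>) * (s - h)\<^sup>2"
    "h\<^sup>2 \<le> s\<^sup>2 + \<epsilon> * h\<^sup>2 + (1 + 1/\<epsilon>) * (s - h)\<^sup>2"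
proof -
  let ?e = "s - h"
  have "0 \<le> (\<epsilon> * h - ?e)\<^sup>2 / \<epsilon>" "0 \<le> (\<epsilon> * h + ?e)\<^sup>2 / \<epsilon>" using assms by auto
  moreover have "(\<epsilon> * h - ?e)\<^sup>2 / \<epsilon> = \<epsilon> * h\<^sup>2 + ?e\<^sup>2 / \<epsilon> - 2 * h * ?e"
    "(\<epsilon> * h + ?e)\<^sup>2 / \<epsilon> = \<epsilon> * h\<^sup>2 + ?e\<^sup>2 / \<epsilon> + 2 * h * ?e"
    using assms by (simp_all add: field_simps power2_eq_square)
  moreover have "s\<^sup>2 = h\<^sup>2 + 2 * h * ?e + ?e\<^sup>2" by (simp add: power2_eq_square algebra_simps)
  moreover have "(1 + 1/\<epsilon>) * ?e\<^sup>2 = ?e\<^sup>2 + ?e\<^sup>2 / \<epsilon>" by (simp add: field_simps)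
  moreover have "0 \<le> ?e\<^sup>2" by simp
  ultimately show "s\<^sup>2 \<le> h\<^sup>2 + \<epsilon> * h\<^sup>2 + (1 + 1/\<epsilon>) * ?e\<^sup>2" "h\<^sup>2 \<le> s\<^sup>2 + \<epsilon> * h\<^sup>2 + (1 + 1/\<epsilon>) * ?e\<^sup>2"
    by linarith+
qed

section \<open>Gaussian moment generating function of the square\<close>

lemma nn_integral_normal_density: "\<sigma> > 0 \<Longrightarrow> (\<integral>\<^sup>+x. ennreal (normal_density \<mu> \<sigma> x) \<partial>lborel) = 1"
  by (subst nn_integral_eq_integral) (simp_all add: integrable_normal_density integral_normal_density)

text \<open>The integrand
  e^(\<mu>x^2) times the N(0, \<sigma>^2) density is a multiple of the N(0, \<sigma>^2/(1 - 2\<mu>\<sigma>^2)) density.\<close>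
lemma gauss_sq_mgf:
  assumes "prob_space M" and Y: "distributed M lborel Y (normal_density 0 \<sigma>)"
    and s: "\<sigma> > 0" and q: "2 * \<mu> * \<sigma>\<^sup>2 < 1"
  shows "(\<integral>\<^sup>+\<omega>. ennreal (exp (\<mu> * (Y \<omega>)\<^sup>2)) \<partial>M) = ennreal (1 / sqrt (1 - 2 * \<mu> * \<sigma>\<^sup>2))"
proof -
  define q where "q = 1 - 2 * \<mu> * \<sigma>\<^sup>2"
  have qp: "q > 0" using q by (simp add: q_def)
  define \<sigma>' where "\<sigma>' = \<sigma> / sqrt q"
  have density: "normal_density 0 \<sigma> x * exp (\<mu> * x\<^sup>2) = (1 / sqrt q) * normal_density 0 \<sigma>' x" for x
  proof -
    have var: "\<sigma>'\<^sup>2 = \<sigma>\<^sup>2 / q" using qp by (simp add: \<sigma>'_def power_divide)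
    then have "sqrt (2 * pi * \<sigma>'\<^sup>2) = sqrt (2 * pi * \<sigma>\<^sup>2) / sqrt q"
      by (simp add: real_sqrt_divide[symmetric])
    then have 1: "1 / sqrt (2 * pi * \<sigma>'\<^sup>2) = sqrt q / sqrt (2 * pi * \<sigma>\<^sup>2)"
      using qp s by simp
    have "-(x - 0)\<^sup>2 / (2 * \<sigma>'\<^sup>2) = -(x - 0)\<^sup>2 * q / (2 * \<sigma>\<^sup>2)"
      using var qp s by simp
    also have "\<dots> = -(x - 0)\<^sup>2 / (2 * \<sigma>\<^sup>2) + \<mu> * x\<^sup>2"
      using s by (simp add: q_def field_simps)
    finally have 2: "-(x - 0)\<^sup>2 / (2 * \<sigma>'\<^sup>2) = -(x - 0)\<^sup>2 / (2 * \<sigma>\<^sup>2) + \<mu> * x\<^sup>2" .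
    show ?thesis unfolding normal_density_def 1 2 using qp
      by (simp add: exp_add exp_minus exp_diff field_simps)
  qed
  have "(\<integral>\<^sup>+\<omega>. ennreal (exp (\<mu> * (Y \<omega>)\<^sup>2)) \<partial>M)
      = (\<integral>\<^sup>+x. ennreal (normal_density 0 \<sigma> x) * ennreal (exp (\<mu> * x\<^sup>2)) \<partial>lborel)"
    by (subst distributed_nn_integral[OF Y]) auto
  also have "\<dots> = (\<integral>\<^sup>+x. ennreal (1 / sqrt q) * ennreal (normal_density 0 \<sigma>' x) \<partial>lborel)"
    using qp by (intro nn_integral_cong) (simp add: density ennreal_mult[symmetric])
  also have "\<dots> = ennreal (1 / sqrt q)"
    by (subst nn_integral_cmult) (auto simp: nn_integral_normal_density \<sigma>'_def s qp)
  finally show ?thesis by (simp add: q_def)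
qed

lemma sorted_nth_le_iff:
  fixes ps :: "real list"
  assumes "sorted_wrt (<) ps" "i < length ps" "j < length ps"
  shows "ps ! i \<le> ps ! j \<longleftrightarrow> i \<le> j"
proof -
  have "i < j \<Longrightarrow> ps ! i < ps ! j" "j < i \<Longrightarrow> ps ! j < ps ! i"
    using assms sorted_wrt_nth_less by blast+
  then show ?thesis by (cases i j rule: linorder_cases) auto
qed

lemma telescope_partition:
  fixes ps :: "real list" and G :: "real \<Rightarrow> real"
  assumes ps: "sorted_wrt (<) ps" and a: "a \<in> set ps" and b: "b \<in> set ps" and ab: "a \<le> b"
  shows "(\<Sum>j<length ps - 1. (if a \<le> ps!j \<and> ps!(Suc j) \<le> b then 1 else 0) * (G (ps!Suc j) - G (ps!j)))
         = G b - G a"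
proof -
  obtain u where u: "u < length ps" "a = ps ! u" using a by (auto simp: in_set_conv_nth)
  obtain v where v: "v < length ps" "b = ps ! v" using b by (auto simp: in_set_conv_nth)
  have uv: "u \<le> v" using sorted_nth_le_iff[OF ps u(1) v(1)] u v ab by simp
  have "(\<Sum>j<length ps - 1. (if a \<le> ps!j \<and> ps!(Suc j) \<le> b then 1 else 0) * (G (ps!Suc j) - G (ps!j)))
      = (\<Sum>j<length ps - 1. (if j \<in> {u..<v} then G (ps!Suc j) - G (ps!j) else 0))"
  proof (rule sum.cong)
    fix j assume j: "j \<in> {..<length ps - 1}"
    then have "a \<le> ps!j \<longleftrightarrow> u \<le> j" "ps!(Suc j) \<le> b \<longleftrightarrow> Suc j \<le> v"
      using sorted_nth_le_iff[OF ps] u v by auto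
    then show "(if a \<le> ps!j \<and> ps!(Suc j) \<le> b then 1 else 0) * (G (ps!Suc j) - G (ps!j))
      = (if j \<in> {u..<v} then G (ps!Suc j) - G (ps!j) else 0)" by auto
  qed simp
  also have "\<dots> = (\<Sum>j\<in>{u..<v}. G (ps!Suc j) - G (ps!j))"
    using v(1) by (subst sum.If_cases) (auto intro!: sum.cong)
  also have "\<dots> = G (ps!v) - G (ps!u)"
    using sum_Suc_diff'[OF uv, of "\<lambda>j. G (ps!j)"] by simp
  finally show ?thesis using u v by simp
qed

definition cell_coef :: "(real \<times> real \<times> real) list \<Rightarrow> real list \<Rightarrow> nat \<Rightarrow> real" where
  "cell_coef d ps j = (\<Sum>(c, a, b)\<leftarrow>d. c * (if a \<le> ps!j \<and> ps!(Suc j) \<le> b then 1 else 0))"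

lemma increments_on_partition:
  fixes ps :: "real list" and G :: "real \<Rightarrow> real"
  assumes ps: "sorted_wrt (<) ps"
    and d: "\<forall>(c, a, b)\<in>set d. a \<in> set ps \<and> b \<in> set ps \<and> a \<le> b"
  shows "(\<Sum>(c, a, b)\<leftarrow>d. c * (G b - G a))
       = (\<Sum>j<length ps - 1. cell_coef d ps j * (G (ps!Suc j) - G (ps!j)))"
  using d
proof (induction d)
  case Nil
  then show ?case by (simp add: cell_coef_def)
next
  case (Cons x d)
  obtain c a b where x: "x = (c, a, b)" by (cases x) auto
  have IH: "(\<Sum>(c, a, b)\<leftarrow>d. c * (G b - G a))
      = (\<Sum>j<length ps - 1. cell_coef d ps j * (G (ps!Suc j) - G (ps!j)))"
    using Cons by auto
  have cell: "G b - G a = (\<Sum>j<length ps - 1.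
      (if a \<le> ps!j \<and> ps!(Suc j) \<le> b then 1 else 0) * (G (ps!Suc j) - G (ps!j)))"
    using telescope_partition[OF ps] Cons.prems x by auto
  show ?case
    unfolding x sum_list.Cons list.map prod.case IH cell
    by (simp add: cell_coef_def sum_distrib_left sum.distrib[symmetric] algebra_simps)
qed

lemma step_partition:
  fixes d :: "(real \<times> real \<times> real) list"
  assumes d: "\<forall>(c, a, b)\<in>set d. 0 \<le> a \<and> a \<le> b \<and> b \<le> 1"
  obtains ps :: "real list" and C :: "nat \<Rightarrow> real"
  where "sorted_wrt (<) ps" "set ps \<subseteq> {0..1}"
    "\<And>G. (\<Sum>(c, a, b)\<leftarrow>d. c * (G b - G a)) = (\<Sum>j<length ps - 1. C j * (G (ps!Suc j) - G (ps!j)))"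
proof -
  define P where "P = (\<lambda>(c, a, b). a) ` set d \<union> (\<lambda>(c, a, b). b) ` set d"
  define ps where "ps = sorted_list_of_set P"
  have ps: "sorted_wrt (<) ps" by (simp add: ps_def strict_sorted_list_of_set)
  have setps: "set ps = P" by (simp add: ps_def P_def)
  have dP: "\<forall>(c, a, b)\<in>set d. a \<in> set ps \<and> b \<in> set ps \<and> a \<le> b"
    using d by (force simp: setps P_def image_iff)
  have "set ps \<subseteq> {0..1}" using d by (auto simp: setps P_def)
  then show thesis using that[OF ps _ increments_on_partition[OF ps dP]] by blast
qed

lemma step_fun_sq_on_partition:
  assumes d: "\<forall>(c, a, b)\<in>set d. 0 \<le> a \<and> a \<le> b \<and> b \<le> 1"
    and ps: "sorted_wrt (<) ps" "set ps \<subseteq> {0..1}"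
    and incr: "\<And>G. (\<Sum>(c, a, b)\<leftarrow>d. c * (G b - G a))
                     = (\<Sum>j<length ps - 1. C j * (G (ps!Suc j) - G (ps!j)))"
  shows "indicator {0..1} t * (step_fun d t)\<^sup>2
       = (\<Sum>j<length ps - 1. (C j)\<^sup>2 * indicator {ps!j<..ps!Suc j} t)"
proof -
  define m where "m = length ps - 1"
  define cell where "cell j = {ps!j<..ps!Suc j}" for j
  have le_iff: "ps!i \<le> ps!j \<longleftrightarrow> i \<le> j" if "i \<le> m" "j \<le> m" "0 < m" for i j
    using sorted_nth_le_iff[OF ps(1), of i j] that by (auto simp: m_def)
  have cell01: "cell j \<subseteq> {0..1}" if "j < m" for j
  proof -
    have "ps!j \<in> set ps" "ps!Suc j \<in> set ps" using that by (auto simp: m_def)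
    then have "0 \<le> ps!j" "ps!Suc j \<le> 1" using ps(2) by auto
    then show ?thesis by (auto simp: cell_def)
  qed
  have disjoint: "j = k" if "j < m" "k < m" "t \<in> cell j" "t \<in> cell k" for j k
  proof (rule ccontr)
    assume "j \<noteq> k"
    then consider "Suc j \<le> k" | "Suc k \<le> j" by linarith
    then show False
      by cases (use le_iff[of "Suc j" k] le_iff[of "Suc k" j] that in \<open>auto simp: cell_def\<close>)
  qed
  have step_cells: "step_fun d t = (\<Sum>j<m. C j * indicator (cell j) t)"
  proof -
    define G where "G = (\<lambda>x. if t \<le> x then 1 else 0 :: real)"
    have "step_fun d t = (\<Sum>(c, a, b)\<leftarrow>d. c * (G b - G a))"
      unfolding step_fun_def
      by (intro arg_cong[where f=sum_list] map_cong) (use d in \<open>auto simp: G_def indicator_def\<close>)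
    also have "\<dots> = (\<Sum>j<m. C j * (G (ps!Suc j) - G (ps!j)))" by (simp add: incr m_def)
    also have "\<dots> = (\<Sum>j<m. C j * indicator (cell j) t)"
    proof (intro sum.cong refl)
      fix j assume "j \<in> {..<m}"
      then have "ps!j < ps!Suc j" using sorted_wrt_nth_less[OF ps(1), of j "Suc j"] by (simp add: m_def)
      then show "C j * (G (ps!Suc j) - G (ps!j)) = C j * indicator (cell j) t"
        by (auto simp: G_def indicator_def cell_def)
    qed
    finally show ?thesis .
  qed
  show ?thesis
  proof (cases "\<exists>j<m. t \<in> cell j")
    case True
    then obtain j where j: "j < m" "t \<in> cell j" by blast
    have pick: "(\<Sum>k<m. u k * indicator (cell k) t) = u j" for u :: "nat \<Rightarrow> real"
    proof -
      have "(\<Sum>k<m. u k * indicator (cell k) t) = (\<Sum>k<m. if k = j then u j else 0)"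
        by (rule sum.cong) (use disjoint j in \<open>auto simp: indicator_def\<close>)
      then show ?thesis using j by simp
    qed
    have "t \<in> {0..1}" using j cell01[of j] by blast
    then show ?thesis using pick[of C] pick[of "\<lambda>k. (C k)\<^sup>2"]
      by (simp add: step_cells cell_def m_def)
  next
    case False
    then have "indicator (cell k) t = (0::real)" if "k < m" for k using that by auto
    then show ?thesis by (simp add: step_cells cell_def m_def)
  qed
qed

lemma step_fun_sq_integral:
  assumes d: "\<forall>(c, a, b)\<in>set d. 0 \<le> a \<and> a \<le> b \<and> b \<le> 1"
    and ps: "sorted_wrt (<) ps" "set ps \<subseteq> {0..1}"
    and incr: "\<And>G. (\<Sum>(c, a, b)\<leftarrow>d. c * (G b - G a))
                     = (\<Sum>j<length ps - 1. C j * (G (ps!Suc j) - G (ps!j)))"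
  shows "integrable lborel (\<lambda>t. indicator {0..1} t * (step_fun d t)\<^sup>2)"
    "(\<integral>t. indicator {0..1} t * (step_fun d t)\<^sup>2 \<partial>lborel)
       = (\<Sum>j<length ps - 1. (C j)\<^sup>2 * (ps!Suc j - ps!j))"
proof -
  have eq: "(\<lambda>t. indicator {0..1} t * (step_fun d t)\<^sup>2)
      = (\<lambda>t. \<Sum>j<length ps - 1. (C j)\<^sup>2 * indicator {ps!j<..ps!Suc j} t)"
    using step_fun_sq_on_partition[OF d ps incr] by auto
  have ordered: "ps!j \<le> ps!Suc j" if "j < length ps - 1" for j
  proof -
    have "Suc j < length ps" using that by simp
    then show ?thesis using sorted_wrt_nth_less[OF ps(1), of j "Suc j"] by simp
  qed
  show "integrable lborel (\<lambda>t. indicator {0..1} t * (step_fun d t)\<^sup>2)"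
    unfolding eq using ordered
    by (intro Bochner_Integration.integrable_sum Bochner_Integration.integrable_mult_right
        integrable_real_indicator) auto
  show "(\<integral>t. indicator {0..1} t * (step_fun d t)\<^sup>2 \<partial>lborel)
       = (\<Sum>j<length ps - 1. (C j)\<^sup>2 * (ps!Suc j - ps!j))"
    unfolding eq using ordered
    by (subst Bochner_Integration.integral_sum) (auto intro!: sum.cong)
qed

lemma step_fun_sq_integrable:
  assumes "\<forall>(c, a, b)\<in>set d. 0 \<le> a \<and> a \<le> b \<and> b \<le> 1"
  shows "integrable lborel (\<lambda>t. indicator {0..1} t * (step_fun d t)\<^sup>2)"
proof -
  obtain ps C where "sorted_wrt (<) ps" "set ps \<subseteq> {0..1}"
    "\<And>G. (\<Sum>(c, a, b)\<leftarrow>d. c * (G b - G a)) = (\<Sum>j<length ps - 1. C j * (G (ps!Suc j) - G (ps!j)))"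
    using step_partition[OF assms] by blast
  then show ?thesis by (rule step_fun_sq_integral(1)[OF assms])
qed

lemma step_fun_measurable: "step_fun d \<in> borel_measurable borel"
proof (induction d)
  case Nil then show ?case by (simp add: step_fun_def)
next
  case (Cons x d)
  obtain c a b where x: "x = (c, a, b)" by (cases x) auto
  have eq: "step_fun (x # d) = (\<lambda>t. c * indicator {a<..b} t + step_fun d t)"
    by (simp add: step_fun_def x fun_eq_iff)
  show ?case unfolding eq using Cons by measurable
qed

lemma step_int_measurable:
  assumes "\<forall>(c, a, b)\<in>set d. W a \<in> borel_measurable M \<and> W b \<in> borel_measurable M"
  shows "step_int W d \<in> borel_measurable M"
  using assms
proof (induction d)
  case Nil then show ?case by (simp add: step_int_def)
next
  case (Cons x d)
  obtain c a b where x: "x = (c, a, b)" by (cases x) auto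
  have m: "W a \<in> borel_measurable M" "W b \<in> borel_measurable M" using Cons.prems x by auto
  have eq: "step_int W (x # d) = (\<lambda>\<omega>. c * (W b \<omega> - W a \<omega>) + step_int W d \<omega>)"
    by (simp add: step_int_def x fun_eq_iff)
  have "step_int W d \<in> borel_measurable M" using Cons by auto
  then show ?case unfolding eq using m by measurable
qed

section \<open>The Ito integral of a step function is Gaussian\<close>

lemma brownian_partition_increments:
  assumes BM: "std_brownian_motion M W"
    and ps: "sorted_wrt (<) ps" "set ps \<subseteq> {0..1}"
  shows "prob_space.indep_vars M (\<lambda>_. borel) (\<lambda>j \<omega>. W (ps!Suc j) \<omega> - W (ps!j) \<omega>) {..<length ps - 1}"
    and "j < length ps - 1 \<Longrightarrow> distributed M lborel (\<lambda>\<omega>. W (ps!Suc j) \<omega> - W (ps!j) \<omega>)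
                                 (normal_density 0 (sqrt (ps!Suc j - ps!j)))"
proof -
  show "prob_space.indep_vars M (\<lambda>_. borel) (\<lambda>j \<omega>. W (ps!Suc j) \<omega> - W (ps!j) \<omega>) {..<length ps - 1}"
    using BM ps unfolding std_brownian_motion_def by blast
  assume j: "j < length ps - 1"
  then have "ps!j < ps!Suc j" using sorted_wrt_nth_less[OF ps(1), of j "Suc j"] by simp
  moreover have "ps!j \<in> set ps" "ps!Suc j \<in> set ps" using j by auto
  then have "0 \<le> ps!j" "ps!Suc j \<le> 1" using ps(2) by auto
  moreover have "\<And>s t. 0 \<le> s \<Longrightarrow> s < t \<Longrightarrow> t \<le> 1 \<Longrightarrow>
      distributed M lborel (\<lambda>\<omega>. W t \<omega> - W s \<omega>) (normal_density 0 (sqrt (t - s)))"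
    using BM unfolding std_brownian_motion_def by blast
  ultimately show "distributed M lborel (\<lambda>\<omega>. W (ps!Suc j) \<omega> - W (ps!j) \<omega>)
      (normal_density 0 (sqrt (ps!Suc j - ps!j)))"
    by blast
qed

text \<open>The stochastic integral of a step function on [0,1] is a linear combination of
  independent Brownian increments, hence N(0, V) with V its squared L2-norm (or identically
  zero if V = 0).\<close>
lemma step_int_gaussian:
  assumes BM: "std_brownian_motion M W"
    and d: "\<forall>(c, a, b)\<in>set d. 0 \<le> a \<and> a \<le> b \<and> b \<le> 1"
    and V: "V = (\<integral>t. indicator {0..1} t * (step_fun d t)\<^sup>2 \<partial>lborel)"
  shows "V = 0 \<and> (\<forall>\<omega>. step_int W d \<omega> = 0)
      \<or> 0 < V \<and> distributed M lborel (step_int W d) (normal_density 0 (sqrt V))"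
proof -
  interpret prob_space M using BM by (simp add: std_brownian_motion_def)
  obtain ps C where ps: "sorted_wrt (<) ps" "set ps \<subseteq> {0..1}"
    and incr: "\<And>G. (\<Sum>(c, a, b)\<leftarrow>d. c * (G b - G a))
                     = (\<Sum>j<length ps - 1. C j * (G (ps!Suc j) - G (ps!j)))"
    using step_partition[OF d] by blast
  define m where "m = length ps - 1"
  define len where "len j = ps!Suc j - ps!j" for j
  define \<Delta> where "\<Delta> j \<omega> = W (ps!Suc j) \<omega> - W (ps!j) \<omega>" for j \<omega>
  have len_pos: "0 < len j" if "j < m" for j
    using that sorted_wrt_nth_less[OF ps(1), of j "Suc j"] by (simp add: len_def m_def)
  note increments = brownian_partition_increments[OF BM ps, folded \<Delta>_def[abs_def] len_def m_def]
  define J where "J = {j\<in>{..<m}. C j \<noteq> 0}"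
  have step_int_cells: "step_int W d \<omega> = (\<Sum>j\<in>J. C j * \<Delta> j \<omega>)" for \<omega>
    unfolding step_int_def incr[of "\<lambda>x. W x \<omega>"] J_def
    by (subst sum.inter_filter) (auto simp: \<Delta>_def m_def intro: sum.cong)
  define \<sigma> where "\<sigma> j = \<bar>C j\<bar> * sqrt (len j)" for j
  have \<sigma>_pos: "0 < \<sigma> j" if "j \<in> J" for j
    using that len_pos by (auto simp: J_def \<sigma>_def)
  have V_cells: "V = (\<Sum>j\<in>J. (\<sigma> j)\<^sup>2)"
    unfolding V step_fun_sq_integral(2)[OF d ps incr] J_def
    by (subst sum.inter_filter)
       (use len_pos in \<open>auto simp: \<sigma>_def len_def m_def power_mult_distrib less_imp_le intro: sum.cong\<close>)
  show ?thesis
  proof (cases "J = {}")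
    case True
    then show ?thesis using V_cells step_int_cells by simp
  next
    case False
    have scaled_indep: "indep_vars (\<lambda>_. borel) (\<lambda>j \<omega>. C j * \<Delta> j \<omega>) J"
      by (rule indep_vars_compose2[OF indep_vars_subset[OF increments(1)],
            where Y="\<lambda>j x. C j * x"]) (auto simp: J_def)
    have scaled_normal: "distributed M lborel (\<lambda>\<omega>. C j * \<Delta> j \<omega>) (normal_density 0 (\<sigma> j))"
      if "j \<in> J" for j
    proof -
      have "j < m" "C j \<noteq> 0" using that by (auto simp: J_def)
      from normal_density_affine[OF increments(2)[OF \<open>j < m\<close>] _ \<open>C j \<noteq> 0\<close>, of 0]
        len_pos[OF \<open>j < m\<close>]
      show ?thesis by (simp add: \<sigma>_def \<Delta>_def)
    qed
    have "distributed M lborel (\<lambda>\<omega>. \<Sum>j\<in>J. C j * \<Delta> j \<omega>)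
        (normal_density (\<Sum>j\<in>J. 0) (sqrt (\<Sum>j\<in>J. (\<sigma> j)\<^sup>2)))"
      by (rule sum_indep_normal[OF _ False scaled_indep \<sigma>_pos scaled_normal]) (simp add: J_def)
    moreover have "0 < V"
    proof -
      have "finite J" by (simp add: J_def)
      moreover have "0 < (\<sigma> j)\<^sup>2" if "j \<in> J" for j using \<sigma>_pos[OF that] by simp
      ultimately show ?thesis unfolding V_cells using False by (intro sum_pos)
    qed
    ultimately show ?thesis by (simp add: step_int_cells[abs_def] V_cells)
  qed
qed

lemma step_int_sq_mgf:
  assumes BM: "std_brownian_motion M W"
    and d: "\<forall>(c, a, b)\<in>set d. 0 \<le> a \<and> a \<le> b \<and> b \<le> 1"
    and V: "V = (\<integral>t. indicator {0..1} t * (step_fun d t)\<^sup>2 \<partial>lborel)"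
    and \<mu>: "2 * \<mu> * V < 1"
  shows "(\<integral>\<^sup>+\<omega>. ennreal (exp (\<mu> * (step_int W d \<omega>)\<^sup>2)) \<partial>M) \<le> ennreal (1 / sqrt (1 - 2 * \<mu> * V))"
proof -
  interpret prob_space M using BM by (simp add: std_brownian_motion_def)
  from step_int_gaussian[OF BM d V] show ?thesis
  proof
    assume "V = 0 \<and> (\<forall>\<omega>. step_int W d \<omega> = 0)"
    then show ?thesis by (simp add: emeasure_space_1)
  next
    assume "0 < V \<and> distributed M lborel (step_int W d) (normal_density 0 (sqrt V))"
    then show ?thesis using gauss_sq_mgf[OF prob_space_axioms, of "step_int W d" "sqrt V" \<mu>] \<mu> by simp
  qed
qed

section \<open>Independent Brownian motions factorise step integrals\<close>

definition path_step_int :: "(real \<times> real \<times> real) list \<Rightarrow> (real \<Rightarrow> real) \<Rightarrow> real" where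
  "path_step_int d p = (\<Sum>(c, a, b)\<leftarrow>d. c * (p b - p a))"

lemma step_int_eq_path_step_int: "step_int W d \<omega> = path_step_int d (\<lambda>t. W t \<omega>)"
  by (simp add: step_int_def path_step_int_def)

text \<open>It only sees the path at the interval endpoints, hence it is a measurable function
  on the path space over [0,1].\<close>
lemma path_step_int_restrict:
  assumes "\<forall>(c, a, b)\<in>set d. a \<in> I \<and> b \<in> I"
  shows "path_step_int d (restrict p I) = path_step_int d p"
  unfolding path_step_int_def using assms by (intro arg_cong[where f=sum_list] map_cong) auto

lemma path_step_int_measurable:
  assumes "\<forall>(c, a, b)\<in>set d. a \<in> I \<and> b \<in> I"
  shows "path_step_int d \<in> borel_measurable (Pi\<^sub>M I (\<lambda>_. borel))"
  using assms
proof (induction d)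
  case Nil then show ?case by (simp add: path_step_int_def)
next
  case (Cons x d)
  obtain c a b where x: "x = (c, a, b)" by (cases x) auto
  have "a \<in> I" "b \<in> I" using Cons.prems x by auto
  have eq: "path_step_int (x # d) = (\<lambda>p. c * (p b - p a) + path_step_int d p)"
    by (simp add: path_step_int_def x fun_eq_iff)
  have "path_step_int d \<in> borel_measurable (Pi\<^sub>M I (\<lambda>_. borel))" using Cons by auto
  then show ?case unfolding eq using \<open>a \<in> I\<close> \<open>b \<in> I\<close> by measurable
qed

text \<open>Step integrals are functions of the restricted paths, so for Brownian motions with
  independent paths the expectation of a product of functions of them factorises.\<close>
lemma indep_step_ints_nn_integral:
  fixes W :: "'i \<Rightarrow> real \<Rightarrow> 'a \<Rightarrow> real" and \<phi> :: "'i \<Rightarrow> real \<Rightarrow> ennreal"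
  assumes prob: "prob_space M" and fin: "finite I"
    and indep: "prob_space.indep_vars M (\<lambda>_. Pi\<^sub>M {0..1} (\<lambda>_. borel))
                  (\<lambda>i \<omega>. restrict (\<lambda>t. W i t \<omega>) {0..1}) I"
    and d: "\<And>i. i \<in> I \<Longrightarrow> \<forall>(c, a, b)\<in>set (d i). a \<in> {0..1} \<and> b \<in> {0..1}"
    and \<phi>: "\<And>i. i \<in> I \<Longrightarrow> \<phi> i \<in> borel_measurable borel"
  shows "(\<integral>\<^sup>+\<omega>. (\<Prod>i\<in>I. \<phi> i (step_int (W i) (d i) \<omega>)) \<partial>M)
       = (\<Prod>i\<in>I. \<integral>\<^sup>+\<omega>. \<phi> i (step_int (W i) (d i) \<omega>) \<partial>M)"
proof -
  interpret prob_space M by fact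
  have paths: "indep_vars (\<lambda>_. borel)
      (\<lambda>i \<omega>. (\<lambda>p. \<phi> i (path_step_int (d i) p)) (restrict (\<lambda>t. W i t \<omega>) {0..1})) I"
  proof (rule indep_vars_compose2[OF indep])
    fix i assume i: "i \<in> I"
    have "path_step_int (d i) \<in> borel_measurable (Pi\<^sub>M {0..1} (\<lambda>_. borel))"
      using d[OF i] by (rule path_step_int_measurable)
    then show "(\<lambda>p. \<phi> i (path_step_int (d i) p)) \<in> borel_measurable (Pi\<^sub>M {0..1} (\<lambda>_. borel))"
      using \<phi>[OF i] by measurable
  qed
  have "indep_vars (\<lambda>_. borel) (\<lambda>i \<omega>. \<phi> i (step_int (W i) (d i) \<omega>)) I"
  proof (rule iffD1[OF indep_vars_cong paths])
    fix i assume "i \<in> I"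
    then show "(\<lambda>\<omega>. (\<lambda>p. \<phi> i (path_step_int (d i) p)) (restrict (\<lambda>t. W i t \<omega>) {0..1}))
        = (\<lambda>\<omega>. \<phi> i (step_int (W i) (d i) \<omega>))"
      using path_step_int_restrict[OF d] by (simp add: fun_eq_iff step_int_eq_path_step_int)
  qed auto
  then show ?thesis by (rule indep_vars_nn_integral[OF fin]) simp
qed

lemma nn_integral_sq_compare:
  fixes s h :: "real \<Rightarrow> real"
  assumes [measurable]: "s \<in> borel_measurable borel" "h \<in> borel_measurable borel" "A \<in> sets borel"
    and \<epsilon>: "0 < \<epsilon>"
  defines "N \<equiv> \<lambda>u. \<integral>\<^sup>+t. ennreal (indicator A t * (u t)\<^sup>2) \<partial>lborel"
  shows "N s \<le> N h + ennreal \<epsilon> * N h + ennreal (1 + 1/\<epsilon>) * N (\<lambda>t. s t - h t)"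
    "N h \<le> N s + ennreal \<epsilon> * N h + ennreal (1 + 1/\<epsilon>) * N (\<lambda>t. s t - h t)"
proof -
  let ?N = "\<lambda>u t. ennreal (indicator A t * (u t)\<^sup>2)"
  have integrate: "N u \<le> N v + ennreal \<epsilon> * N h + ennreal (1 + 1/\<epsilon>) * N (\<lambda>t. s t - h t)"
    if [measurable]: "u \<in> borel_measurable borel" "v \<in> borel_measurable borel"
      and pt: "\<And>t. (u t)\<^sup>2 \<le> (v t)\<^sup>2 + \<epsilon> * (h t)\<^sup>2 + (1 + 1/\<epsilon>) * (s t - h t)\<^sup>2" for u v
  proof -
    have "?N u t \<le> ?N v t + ennreal \<epsilon> * ?N h t + ennreal (1 + 1/\<epsilon>) * ?N (\<lambda>t. s t - h t) t" for t
    proof -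
      have "indicator A t * (u t)\<^sup>2 \<le> indicator A t * (v t)\<^sup>2 + \<epsilon> * (indicator A t * (h t)\<^sup>2)
          + (1 + 1/\<epsilon>) * (indicator A t * (s t - h t)\<^sup>2)"
        using pt[of t] by (auto simp: indicator_def)
      then show ?thesis using \<epsilon>
        by (simp add: ennreal_plus[symmetric] ennreal_mult[symmetric] ennreal_leI del: ennreal_plus)
    qed
    then have "N u \<le> (\<integral>\<^sup>+t. ?N v t + ennreal \<epsilon> * ?N h t + ennreal (1 + 1/\<epsilon>) * ?N (\<lambda>t. s t - h t) t \<partial>lborel)"
      unfolding N_def by (intro nn_integral_mono)
    also have "\<dots> = N v + ennreal \<epsilon> * N h + ennreal (1 + 1/\<epsilon>) * N (\<lambda>t. s t - h t)"
      unfolding N_def by (simp add: nn_integral_add nn_integral_cmult)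
    finally show ?thesis .
  qed
  show "N s \<le> N h + ennreal \<epsilon> * N h + ennreal (1 + 1/\<epsilon>) * N (\<lambda>t. s t - h t)"
    using sq_compare(1)[OF \<epsilon>] by (intro integrate) auto
  show "N h \<le> N s + ennreal \<epsilon> * N h + ennreal (1 + 1/\<epsilon>) * N (\<lambda>t. s t - h t)"
    using sq_compare(2)[OF \<epsilon>] by (intro integrate) auto
qed

lemma sq_norm_convergence:
  fixes s :: "nat \<Rightarrow> real \<Rightarrow> real" and h :: "real \<Rightarrow> real"
  assumes meas: "\<And>k. s k \<in> borel_measurable borel" "h \<in> borel_measurable borel" "A \<in> sets borel"
    and conv: "(\<lambda>k. \<integral>\<^sup>+t. ennreal (indicator A t * (s k t - h t)\<^sup>2) \<partial>lborel) \<longlonglongrightarrow> 0"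
    and hS: "(\<integral>\<^sup>+t. ennreal (indicator A t * (h t)\<^sup>2) \<partial>lborel) = ennreal S"
    and sV: "\<And>k. (\<integral>\<^sup>+t. ennreal (indicator A t * (s k t)\<^sup>2) \<partial>lborel) = ennreal (V k)"
    and S0: "0 \<le> S" and V0: "\<And>k. 0 \<le> V k"
  shows "V \<longlonglongrightarrow> S"
proof (rule LIMSEQ_I)
  fix r :: real assume r: "0 < r"
  define D where "D k = (\<integral>\<^sup>+t. ennreal (indicator A t * (s k t - h t)\<^sup>2) \<partial>lborel)" for k
  define \<epsilon> where "\<epsilon> = r / (2 * (S + 1))"
  have \<epsilon>: "0 < \<epsilon>" "\<epsilon> * S < r / 2" using r S0 by (auto simp: \<epsilon>_def field_simps)
  define c where "c = 1 + 1/\<epsilon>"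
  have c: "0 < c" using \<epsilon> by (simp add: c_def add_pos_pos)
  have "eventually (\<lambda>k. D k < ennreal (r / 2 / c)) sequentially"
    using order_tendstoD(2)[OF conv[folded D_def], of "ennreal (r / 2 / c)"] r c by auto
  then obtain K where K: "\<And>k. k \<ge> K \<Longrightarrow> D k < ennreal (r / 2 / c)"
    by (auto simp: eventually_sequentially)
  show "\<exists>K. \<forall>k\<ge>K. norm (V k - S) < r"
  proof (intro exI allI impI)
    fix k assume "K \<le> k"
    then obtain dk where dk: "D k = ennreal dk" "0 \<le> dk" "dk < r / 2 / c"
      using K by (metis ennreal_cases ennreal_less_iff ennreal_less_top infinity_ennreal_def
          less_imp_le not_less_iff_gr_or_eq top_greatest)
    have to_real: "ennreal x + ennreal \<epsilon> * ennreal S + ennreal c * D k = ennreal (x + \<epsilon> * S + c * dk)"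
      if "0 \<le> x" for x
      using that S0 \<epsilon> dk c by (simp add: ennreal_plus ennreal_mult)
    have "ennreal (V k) \<le> ennreal (S + \<epsilon> * S + c * dk)"
      using nn_integral_sq_compare(1)[OF meas(1,2,3) \<epsilon>(1), of k] to_real[OF S0]
      by (simp add: hS sV D_def c_def)
    then have upper: "V k \<le> S + \<epsilon> * S + c * dk"
      using S0 \<epsilon> dk c by (subst (asm) ennreal_le_iff) auto
    have "ennreal S \<le> ennreal (V k + \<epsilon> * S + c * dk)"
      using nn_integral_sq_compare(2)[OF meas(1,2,3) \<epsilon>(1), of k] to_real[OF V0[of k]]
      by (simp add: hS sV D_def c_def)
    then have lower: "S \<le> V k + \<epsilon> * S + c * dk"
      using S0 \<epsilon> dk c V0[of k] by (subst (asm) ennreal_le_iff) auto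
    have "c * dk < r / 2" using dk c by (simp add: field_simps)
    then show "norm (V k - S) < r" using upper lower \<epsilon>(2) by (simp add: abs_less_iff)
  qed
qed

section \<open>Almost sure convergence along a subsequence and Fatou's lemma\<close>

text \<open>Convergence in L1 of nonnegative functions implies almost sure convergence of a
  subsequence (the library version is stated for integrable functions; truncation at 1
  reduces to it).\<close>
lemma L1_AE_subseq:
  assumes "prob_space M" and [measurable]: "\<And>k. Z k \<in> borel_measurable M"
    and Z0: "\<And>k \<omega>. 0 \<le> Z k \<omega>"
    and lim: "(\<lambda>k. \<integral>\<^sup>+\<omega>. ennreal (Z k \<omega>) \<partial>M) \<longlonglongrightarrow> 0"
  shows "\<exists>r. strict_mono r \<and> (AE \<omega> in M. (\<lambda>k. Z (r k) \<omega>) \<longlonglongrightarrow> 0)"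
proof -
  interpret prob_space M by fact
  define u where "u k \<omega> = min (Z k \<omega>) 1" for k \<omega>
  have [measurable]: "u k \<in> borel_measurable M" for k unfolding u_def by measurable
  have ui: "integrable M (u k)" for k
    by (rule integrable_const_bound[where B=1]) (auto simp: u_def Z0)
  have u0: "0 \<le> u k \<omega>" for k \<omega> using Z0 by (simp add: u_def)
  have "(\<lambda>k. ennreal (\<integral>\<omega>. u k \<omega> \<partial>M)) \<longlonglongrightarrow> 0"
  proof (rule tendsto_sandwich[OF _ _ tendsto_const lim])
    show "\<forall>\<^sub>F k in sequentially. 0 \<le> ennreal (\<integral>\<omega>. u k \<omega> \<partial>M)" by simp
    show "\<forall>\<^sub>F k in sequentially. ennreal (\<integral>\<omega>. u k \<omega> \<partial>M) \<le> (\<integral>\<^sup>+\<omega>. ennreal (Z k \<omega>) \<partial>M)"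
    proof (intro always_eventually allI)
      fix k
      have "ennreal (\<integral>\<omega>. u k \<omega> \<partial>M) = (\<integral>\<^sup>+\<omega>. ennreal (u k \<omega>) \<partial>M)"
        using ui u0 by (intro nn_integral_eq_integral[symmetric]) auto
      also have "\<dots> \<le> (\<integral>\<^sup>+\<omega>. ennreal (Z k \<omega>) \<partial>M)"
        by (intro nn_integral_mono ennreal_leI) (auto simp: u_def)
      finally show "ennreal (\<integral>\<omega>. u k \<omega> \<partial>M) \<le> (\<integral>\<^sup>+\<omega>. ennreal (Z k \<omega>) \<partial>M)" .
    qed
  qed
  then have "(\<lambda>k. (\<integral>\<omega>. u k \<omega> \<partial>M)) \<longlonglongrightarrow> 0"
    using u0 by (subst (asm) ennreal_0[symmetric], subst (asm) tendsto_ennreal_iff)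
      (auto intro: integral_nonneg_AE)
  moreover have "(\<integral>\<omega>. norm (u k \<omega>) \<partial>M) = (\<integral>\<omega>. u k \<omega> \<partial>M)" for k using u0 by simp
  ultimately obtain r where r: "strict_mono r" "AE \<omega> in M. (\<lambda>k. u (r k) \<omega>) \<longlonglongrightarrow> 0"
    using tendsto_L1_AE_subseq[of M u] ui by auto
  have "AE \<omega> in M. (\<lambda>k. Z (r k) \<omega>) \<longlonglongrightarrow> 0"
    using r(2)
  proof eventually_elim
    case (elim \<omega>)
    have "eventually (\<lambda>k. u (r k) \<omega> < 1) sequentially"
      using order_tendstoD(2)[OF elim] by simp
    then have "eventually (\<lambda>k. u (r k) \<omega> = Z (r k) \<omega>) sequentially"
      by eventually_elim (auto simp: u_def)
    then show ?case using elim by (rule Lim_transform_eventually[rotated])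
  qed
  then show ?thesis using r(1) by blast
qed

lemma L2_AE_subseq:
  fixes Y :: "'i \<Rightarrow> nat \<Rightarrow> 'a \<Rightarrow> real" and X :: "'i \<Rightarrow> 'a \<Rightarrow> real"
  assumes prob: "prob_space M" and fin: "finite I"
    and Y_meas: "\<And>i k. i \<in> I \<Longrightarrow> Y i k \<in> borel_measurable M"
    and X_meas: "\<And>i. i \<in> I \<Longrightarrow> X i \<in> borel_measurable M"
    and L2: "\<And>i. i \<in> I \<Longrightarrow> (\<lambda>k. \<integral>\<^sup>+\<omega>. ennreal ((Y i k \<omega> - X i \<omega>)\<^sup>2) \<partial>M) \<longlonglongrightarrow> 0"
  obtains r where "strict_mono r" "AE \<omega> in M. \<forall>i\<in>I. (\<lambda>k. Y i (r k) \<omega>) \<longlonglongrightarrow> X i \<omega>"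
proof -
  define Z where "Z k \<omega> = (\<Sum>i\<in>I. (Y i k \<omega> - X i \<omega>)\<^sup>2)" for k \<omega>
  have Z_meas: "Z k \<in> borel_measurable M" for k
    unfolding Z_def using Y_meas X_meas by (intro borel_measurable_sum) auto
  have "(\<integral>\<^sup>+\<omega>. ennreal (Z k \<omega>) \<partial>M) = (\<Sum>i\<in>I. \<integral>\<^sup>+\<omega>. ennreal ((Y i k \<omega> - X i \<omega>)\<^sup>2) \<partial>M)" for k
  proof -
    have "(\<integral>\<^sup>+\<omega>. ennreal (Z k \<omega>) \<partial>M) = (\<integral>\<^sup>+\<omega>. (\<Sum>i\<in>I. ennreal ((Y i k \<omega> - X i \<omega>)\<^sup>2)) \<partial>M)"
      unfolding Z_def by (intro nn_integral_cong) (rule sum_ennreal[symmetric], simp)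
    also have "\<dots> = (\<Sum>i\<in>I. \<integral>\<^sup>+\<omega>. ennreal ((Y i k \<omega> - X i \<omega>)\<^sup>2) \<partial>M)"
      using Y_meas X_meas by (intro nn_integral_sum) auto
    finally show ?thesis .
  qed
  moreover have "(\<lambda>k. \<Sum>i\<in>I. \<integral>\<^sup>+\<omega>. ennreal ((Y i k \<omega> - X i \<omega>)\<^sup>2) \<partial>M) \<longlonglongrightarrow> (\<Sum>i\<in>I. 0)"
    using L2 by (intro tendsto_sum) auto
  ultimately have "(\<lambda>k. \<integral>\<^sup>+\<omega>. ennreal (Z k \<omega>) \<partial>M) \<longlonglongrightarrow> 0" by simp
  moreover have "0 \<le> Z k \<omega>" for k \<omega> unfolding Z_def by (intro sum_nonneg) auto
  ultimately have "\<exists>r. strict_mono r \<and> (AE \<omega> in M. (\<lambda>k. Z (r k) \<omega>) \<longlonglongrightarrow> 0)"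
    by (intro L1_AE_subseq[OF prob Z_meas])
  then obtain r where r: "strict_mono r" "AE \<omega> in M. (\<lambda>k. Z (r k) \<omega>) \<longlonglongrightarrow> 0" by blast
  have "AE \<omega> in M. \<forall>i\<in>I. (\<lambda>k. Y i (r k) \<omega>) \<longlonglongrightarrow> X i \<omega>"
    using r(2)
  proof eventually_elim
    case (elim \<omega>)
    show ?case
    proof
      fix i assume i: "i \<in> I"
      have "(\<lambda>k. (Y i (r k) \<omega> - X i \<omega>)\<^sup>2) \<longlonglongrightarrow> 0"
      proof (rule tendsto_sandwich[OF _ _ tendsto_const elim])
        show "\<forall>\<^sub>F k in sequentially. 0 \<le> (Y i (r k) \<omega> - X i \<omega>)\<^sup>2" by simp
        show "\<forall>\<^sub>F k in sequentially. (Y i (r k) \<omega> - X i \<omega>)\<^sup>2 \<le> Z (r k) \<omega>"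
          unfolding Z_def using i fin by (intro always_eventually allI member_le_sum) auto
      qed
      then have "(\<lambda>k. sqrt ((Y i (r k) \<omega> - X i \<omega>)\<^sup>2)) \<longlonglongrightarrow> sqrt 0" by (rule tendsto_real_sqrt)
      then have "(\<lambda>k. Y i (r k) \<omega> - X i \<omega>) \<longlonglongrightarrow> 0" by (simp add: tendsto_rabs_zero_iff)
      then show "(\<lambda>k. Y i (r k) \<omega>) \<longlonglongrightarrow> X i \<omega>" by (rule LIM_zero_cancel)
    qed
  qed
  then show thesis using that r(1) by blast
qed

lemma nn_integral_le_limit_bound:
  fixes F :: "nat \<Rightarrow> 'a \<Rightarrow> real"
  assumes F_meas: "\<And>k. F k \<in> borel_measurable M"
    and lim: "AE \<omega> in M. (\<lambda>k. F k \<omega>) \<longlonglongrightarrow> G \<omega>"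
    and bound: "eventually (\<lambda>k. (\<integral>\<^sup>+\<omega>. ennreal (F k \<omega>) \<partial>M) \<le> ennreal (B k)) sequentially"
    and B: "B \<longlonglongrightarrow> b"
  shows "(\<integral>\<^sup>+\<omega>. ennreal (G \<omega>) \<partial>M) \<le> ennreal b"
proof -
  have "(\<integral>\<^sup>+\<omega>. ennreal (G \<omega>) \<partial>M) = (\<integral>\<^sup>+\<omega>. liminf (\<lambda>k. ennreal (F k \<omega>)) \<partial>M)"
    using lim
  proof (intro nn_integral_cong_AE, eventually_elim)
    case (elim \<omega>)
    have "(\<lambda>k. ennreal (F k \<omega>)) \<longlonglongrightarrow> ennreal (G \<omega>)" by (intro tendsto_ennrealI) (simp add: elim)
    then show ?case by (rule lim_imp_Liminf[symmetric, OF trivial_limit_sequentially])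
  qed
  also have "\<dots> \<le> liminf (\<lambda>k. \<integral>\<^sup>+\<omega>. ennreal (F k \<omega>) \<partial>M)"
    using F_meas by (intro nn_integral_liminf) measurable
  also have "\<dots> \<le> liminf (\<lambda>k. ennreal (B k))"
    by (rule Liminf_mono[OF bound])
  also have "\<dots> = ennreal b"
    using B by (intro lim_imp_Liminf tendsto_ennrealI) auto
  finally show ?thesis .
qed

lemma step_ints_sq_sum_mgf:
  fixes M :: "'a measure" and W :: "'i \<Rightarrow> real \<Rightarrow> 'a \<Rightarrow> real"
  assumes prob: "prob_space M" and fin: "finite I"
    and BM: "\<And>i. i \<in> I \<Longrightarrow> std_brownian_motion M (W i)"
    and indep: "prob_space.indep_vars M (\<lambda>_. Pi\<^sub>M {0..1} (\<lambda>_. borel))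
                  (\<lambda>i \<omega>. restrict (\<lambda>t. W i t \<omega>) {0..1}) I"
    and d: "\<And>i. i \<in> I \<Longrightarrow> \<forall>(c, a, b)\<in>set (d i). 0 \<le> a \<and> a \<le> b \<and> b \<le> 1"
    and \<mu>: "\<And>i. i \<in> I \<Longrightarrow> 2 * \<mu> * (\<integral>t. indicator {0..1} t * (step_fun (d i) t)\<^sup>2 \<partial>lborel) < 1"
  shows "(\<integral>\<^sup>+\<omega>. ennreal (exp (\<mu> * (\<Sum>i\<in>I. (step_int (W i) (d i) \<omega>)\<^sup>2))) \<partial>M)
       \<le> ennreal (\<Prod>i\<in>I. 1 / sqrt (1 - 2 * \<mu> * (\<integral>t. indicator {0..1} t * (step_fun (d i) t)\<^sup>2 \<partial>lborel)))"
proof -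
  have "(\<integral>\<^sup>+\<omega>. ennreal (exp (\<mu> * (\<Sum>i\<in>I. (step_int (W i) (d i) \<omega>)\<^sup>2))) \<partial>M)
      = (\<integral>\<^sup>+\<omega>. (\<Prod>i\<in>I. ennreal (exp (\<mu> * (step_int (W i) (d i) \<omega>)\<^sup>2))) \<partial>M)"
    using fin by (simp add: sum_distrib_left exp_sum prod_ennreal)
  also have "\<dots> = (\<Prod>i\<in>I. \<integral>\<^sup>+\<omega>. ennreal (exp (\<mu> * (step_int (W i) (d i) \<omega>)\<^sup>2)) \<partial>M)"
  proof (rule indep_step_ints_nn_integral[OF prob fin indep])
    fix i assume "i \<in> I"
    show "\<forall>(c, a, b)\<in>set (d i). a \<in> {0..1} \<and> b \<in> {0..1}" using d[OF \<open>i \<in> I\<close>] by fastforce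
  qed measurable
  also have "\<dots> \<le> (\<Prod>i\<in>I. ennreal (1 / sqrt (1 - 2 * \<mu> *
      (\<integral>t. indicator {0..1} t * (step_fun (d i) t)\<^sup>2 \<partial>lborel))))"
    using BM d \<mu> by (intro prod_mono_ennreal step_int_sq_mgf) auto
  also have "\<dots> = ennreal (\<Prod>i\<in>I. 1 / sqrt (1 - 2 * \<mu> *
      (\<integral>t. indicator {0..1} t * (step_fun (d i) t)\<^sup>2 \<partial>lborel)))"
    using \<mu> by (intro prod_ennreal) force
  finally show ?thesis .
qed

lemma ito_step_approximation:
  assumes X_ito: "is_ito_integral M W h X" and h_meas: "h \<in> borel_measurable borel"
    and hS: "(\<integral>\<^sup>+t. ennreal (indicator {0..1} t * (h t)\<^sup>2) \<partial>lborel) = ennreal S" and S0: "0 \<le> S"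
  obtains d :: "nat \<Rightarrow> (real \<times> real \<times> real) list"
  where "\<forall>k. \<forall>(c, a, b) \<in> set (d k). 0 \<le> a \<and> a \<le> b \<and> b \<le> 1"
    "(\<lambda>k. \<integral>\<^sup>+ \<omega>. ennreal ((step_int W (d k) \<omega> - X \<omega>)\<^sup>2) \<partial>M) \<longlonglongrightarrow> 0"
    "(\<lambda>k. \<integral>t. indicator {0..1} t * (step_fun (d k) t)\<^sup>2 \<partial>lborel) \<longlonglongrightarrow> S"
proof -
  obtain d where d01: "\<forall>k. \<forall>(c, a, b) \<in> set (d k). 0 \<le> a \<and> a \<le> b \<and> b \<le> 1"
    and L2: "(\<lambda>k. \<integral>\<^sup>+ t. ennreal (indicator {0..1} t * (step_fun (d k) t - h t)\<^sup>2) \<partial>lborel) \<longlonglongrightarrow> 0"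
    and ito: "(\<lambda>k. \<integral>\<^sup>+ \<omega>. ennreal ((step_int W (d k) \<omega> - X \<omega>)\<^sup>2) \<partial>M) \<longlonglongrightarrow> 0"
    using X_ito unfolding is_ito_integral_def by blast
  have "(\<lambda>k. \<integral>t. indicator {0..1} t * (step_fun (d k) t)\<^sup>2 \<partial>lborel) \<longlonglongrightarrow> S"
  proof (rule sq_norm_convergence[where s="\<lambda>k. step_fun (d k)" and h=h and A="{0..1}"])
    show "(\<integral>\<^sup>+t. ennreal (indicator {0..1} t * (step_fun (d k) t)\<^sup>2) \<partial>lborel)
        = ennreal (\<integral>t. indicator {0..1} t * (step_fun (d k) t)\<^sup>2 \<partial>lborel)" for k
      using step_fun_sq_integrable[of "d k"] d01 by (intro nn_integral_eq_integral) auto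
  qed (use L2 hS S0 step_fun_measurable h_meas in \<open>auto intro: integral_nonneg_AE\<close>)
  then show thesis using that d01 ito by blast
qed

text \<open>If X_i (i in a finite set I) are Ito integrals of one deterministic integrand h with
  squared L2[0,1]-norm S against Brownian motions with independent paths, then
  E exp(\<mu> \<Sum> X_i^2) \<le> (1 - 2\<mu>S)^(-|I|/2): the bound holds for the step approximations by
  independence and the Gaussian computation, and passes to the limit by Fatou's lemma along
  an almost surely convergent subsequence.\<close>
lemma ito_sq_sum_mgf:
  fixes M :: "'a measure" and W :: "'i \<Rightarrow> real \<Rightarrow> 'a \<Rightarrow> real" and X :: "'i \<Rightarrow> 'a \<Rightarrow> real"
    and h :: "real \<Rightarrow> real"
  assumes prob: "prob_space M" and fin: "finite I"
    and BM: "\<And>i. i \<in> I \<Longrightarrow> std_brownian_motion M (W i)"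
    and indep: "prob_space.indep_vars M (\<lambda>_. Pi\<^sub>M {0..1} (\<lambda>_. borel))
                  (\<lambda>i \<omega>. restrict (\<lambda>t. W i t \<omega>) {0..1}) I"
    and h_meas: "h \<in> borel_measurable borel"
    and hS: "(\<integral>\<^sup>+t. ennreal (indicator {0..1} t * (h t)\<^sup>2) \<partial>lborel) = ennreal S" and S0: "0 \<le> S"
    and X_ito: "\<And>i. i \<in> I \<Longrightarrow> is_ito_integral M (W i) h (X i)"
    and \<mu>: "0 \<le> \<mu>" "2 * \<mu> * S < 1"
  shows "(\<integral>\<^sup>+\<omega>. ennreal (exp (\<mu> * (\<Sum>i\<in>I. (X i \<omega>)\<^sup>2))) \<partial>M)
       \<le> ennreal ((1 / sqrt (1 - 2 * \<mu> * S)) ^ card I)"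
proof -
  have "\<forall>i\<in>I. \<exists>d :: nat \<Rightarrow> (real \<times> real \<times> real) list.
        (\<forall>k. \<forall>(c, a, b) \<in> set (d k). 0 \<le> a \<and> a \<le> b \<and> b \<le> 1) \<and>
        ((\<lambda>k. \<integral>\<^sup>+ \<omega>. ennreal ((step_int (W i) (d k) \<omega> - X i \<omega>)\<^sup>2) \<partial>M) \<longlonglongrightarrow> 0) \<and>
        ((\<lambda>k. \<integral>t. indicator {0..1} t * (step_fun (d k) t)\<^sup>2 \<partial>lborel) \<longlonglongrightarrow> S)"
    (is "\<forall>i\<in>I. \<exists>d. ?P i d")
  proof
    fix i assume "i \<in> I"
    obtain d where "\<forall>k. \<forall>(c, a, b) \<in> set (d k). 0 \<le> a \<and> a \<le> b \<and> b \<le> 1"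
      "(\<lambda>k. \<integral>\<^sup>+ \<omega>. ennreal ((step_int (W i) (d k) \<omega> - X i \<omega>)\<^sup>2) \<partial>M) \<longlonglongrightarrow> 0"
      "(\<lambda>k. \<integral>t. indicator {0..1} t * (step_fun (d k) t)\<^sup>2 \<partial>lborel) \<longlonglongrightarrow> S"
      by (rule ito_step_approximation[OF X_ito[OF \<open>i \<in> I\<close>] h_meas hS S0])
    then show "\<exists>d. ?P i d" by blast
  qed
  from bchoice[OF this] obtain D where D: "\<forall>i\<in>I. ?P i (D i)" by blast
  define Y where "Y i k = step_int (W i) (D i k)" for i k
  define V where "V i k = (\<integral>t. indicator {0..1} t * (step_fun (D i k) t)\<^sup>2 \<partial>lborel)" for i k
  have D01: "\<forall>(c, a, b) \<in> set (D i k). 0 \<le> a \<and> a \<le> b \<and> b \<le> 1" if "i \<in> I" for i k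
    using D that by blast
  have D_ito: "(\<lambda>k. \<integral>\<^sup>+ \<omega>. ennreal ((Y i k \<omega> - X i \<omega>)\<^sup>2) \<partial>M) \<longlonglongrightarrow> 0" if "i \<in> I" for i
    using D that unfolding Y_def by blast
  have V_lim: "(\<lambda>k. V i (r k)) \<longlonglongrightarrow> S" if "i \<in> I" and r: "strict_mono r" for i r
  proof -
    have "V i \<longlonglongrightarrow> S" using D that(1) unfolding V_def[abs_def] by blast
    from LIMSEQ_subseq_LIMSEQ[OF this r] show ?thesis by (simp add: comp_def)
  qed
  have Y_meas: "Y i k \<in> borel_measurable M" if "i \<in> I" for i k
    unfolding Y_def using D01[OF that, of k] BM[OF that]
    by (intro step_int_measurable) (auto simp: std_brownian_motion_def)
  have X_meas: "X i \<in> borel_measurable M" if "i \<in> I" for i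
    using X_ito[OF that] by (simp add: is_ito_integral_def)
  obtain r where r: "strict_mono r" and Y_lim: "AE \<omega> in M. \<forall>i\<in>I. (\<lambda>k. Y i (r k) \<omega>) \<longlonglongrightarrow> X i \<omega>"
    by (rule L2_AE_subseq[OF prob fin, of Y X]) (use Y_meas X_meas D_ito in auto)
  text \<open>For large k all approximants satisfy 2\<mu>V < 1, so the factorised Gaussian bound applies.\<close>
  define B where "B k = (\<Prod>i\<in>I. 1 / sqrt (1 - 2 * \<mu> * V i (r k)))" for k
  have admissible: "eventually (\<lambda>k. \<forall>i\<in>I. 2 * \<mu> * V i (r k) < 1) sequentially"
  proof (subst eventually_ball_finite_distrib[OF fin], intro ballI)
    fix i assume "i \<in> I"
    have "(\<lambda>k. 2 * \<mu> * V i (r k)) \<longlonglongrightarrow> 2 * \<mu> * S" by (intro tendsto_intros V_lim \<open>i \<in> I\<close> r)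
    from order_tendstoD(2)[OF this \<mu>(2)] show "eventually (\<lambda>k. 2 * \<mu> * V i (r k) < 1) sequentially" .
  qed
  have "eventually (\<lambda>k. (\<integral>\<^sup>+\<omega>. ennreal (exp (\<mu> * (\<Sum>i\<in>I. (Y i (r k) \<omega>)\<^sup>2))) \<partial>M) \<le> ennreal (B k))
      sequentially"
    using admissible
  proof eventually_elim
    case (elim k)
    show ?case unfolding Y_def B_def V_def
      by (rule step_ints_sq_sum_mgf[OF prob fin BM indep D01]) (use elim in \<open>auto simp: V_def\<close>)
  qed
  moreover have "B \<longlonglongrightarrow> (1 / sqrt (1 - 2 * \<mu> * S)) ^ card I"
  proof -
    have "B \<longlonglongrightarrow> (\<Prod>i\<in>I. 1 / sqrt (1 - 2 * \<mu> * S))"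
      unfolding B_def using \<mu> r by (intro tendsto_prod tendsto_intros V_lim) auto
    then show ?thesis by simp
  qed
  moreover have "AE \<omega> in M. (\<lambda>k. exp (\<mu> * (\<Sum>i\<in>I. (Y i (r k) \<omega>)\<^sup>2)))
      \<longlonglongrightarrow> exp (\<mu> * (\<Sum>i\<in>I. (X i \<omega>)\<^sup>2))"
    using Y_lim by eventually_elim (intro tendsto_intros, auto)
  moreover have "(\<lambda>\<omega>. exp (\<mu> * (\<Sum>i\<in>I. (Y i (r k) \<omega>)\<^sup>2))) \<in> borel_measurable M" for k
    using Y_meas by measurable
  ultimately show ?thesis by (intro nn_integral_le_limit_bound) auto
qed

section \<open>Translation invariance for periodic functions\<close>

lemma periodic_int:
  fixes G :: "real \<Rightarrow> 'b"
  assumes per: "\<And>x. G (x + 1) = G x"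
  shows "G (x + of_int m) = G x"
proof (induction m rule: int_induct[where k=0])
  case base then show ?case by simp
next
  case (step1 i) then show ?case using per[of "x + of_int i"] by (simp add: add.assoc)
next
  case (step2 i) then show ?case using per[of "x + of_int (i - 1)"] by (simp add: add.assoc)
qed

text \<open>The integral of a 1-periodic function over any window [a, a+1) equals that over
  [0,1): split the window at the integer point inside it and shift the pieces.\<close>
lemma periodic_window_nn_integral:
  fixes G :: "real \<Rightarrow> ennreal"
  assumes per: "\<And>x. G (x + 1) = G x" and [measurable]: "G \<in> borel_measurable borel"
  shows "(\<integral>\<^sup>+x. indicator {a..<a+1} x * G x \<partial>lborel) = (\<integral>\<^sup>+x. indicator {0..<1} x * G x \<partial>lborel)"
proof -
  define m where "m = \<lfloor>a\<rfloor>"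
  define r where "r = a - of_int m"
  have r: "0 \<le> r" "r < 1" unfolding r_def m_def by linarith+
  have "(\<integral>\<^sup>+x. indicator {a..<a+1} x * G x \<partial>lborel)
      = (\<integral>\<^sup>+y. indicator {a..<a+1} (of_int m + 1 * y) * G (of_int m + 1 * y) \<partial>lborel)"
    by (subst nn_integral_real_affine[where c=1 and t="of_int m"]) auto
  also have "\<dots> = (\<integral>\<^sup>+y. indicator {r..<r+1} y * G y \<partial>lborel)"
  proof (intro nn_integral_cong)
    fix y
    have "G (of_int m + 1 * y) = G y" using periodic_int[of G y m, OF per] by (simp add: add.commute)
    moreover have "indicator {a..<a+1} (of_int m + 1 * y) = (indicator {r..<r+1} y :: ennreal)"
      by (auto simp: indicator_def r_def)
    ultimately show "indicator {a..<a+1} (of_int m + 1 * y) * G (of_int m + 1 * y)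
        = indicator {r..<r+1} y * G y"
      by simp
  qed
  also have "\<dots> = (\<integral>\<^sup>+y. indicator {r..<1} y * G y + indicator {1..<r+1} y * G y \<partial>lborel)"
    by (intro nn_integral_cong) (use r in \<open>auto simp: indicator_def\<close>)
  also have "\<dots> = (\<integral>\<^sup>+y. indicator {r..<1} y * G y \<partial>lborel) + (\<integral>\<^sup>+y. indicator {1..<r+1} y * G y \<partial>lborel)"
    by (rule nn_integral_add) auto
  also have "(\<integral>\<^sup>+y. indicator {1..<r+1} y * G y \<partial>lborel)
      = (\<integral>\<^sup>+z. indicator {1..<r+1} (1 + 1 * z) * G (1 + 1 * z) \<partial>lborel)"
    by (subst nn_integral_real_affine[where c=1 and t=1]) auto
  also have "\<dots> = (\<integral>\<^sup>+z. indicator {0..<r} z * G z \<partial>lborel)"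
  proof (intro nn_integral_cong)
    fix z
    have "G (1 + 1 * z) = G z" using per[of z] by (simp add: add.commute)
    then show "indicator {1..<r+1} (1 + 1 * z) * G (1 + 1 * z) = indicator {0..<r} z * G z"
      by (auto simp: indicator_def)
  qed
  also have "(\<integral>\<^sup>+y. indicator {r..<1} y * G y \<partial>lborel) + (\<integral>\<^sup>+z. indicator {0..<r} z * G z \<partial>lborel)
      = (\<integral>\<^sup>+y. indicator {r..<1} y * G y + indicator {0..<r} y * G y \<partial>lborel)"
    by (rule nn_integral_add[symmetric]) auto
  also have "\<dots> = (\<integral>\<^sup>+x. indicator {0..<1} x * G x \<partial>lborel)"
    by (intro nn_integral_cong) (use r in \<open>auto simp: indicator_def\<close>)
  finally show ?thesis .
qed

text \<open>Consequently the integral over [0,1] of a 1-periodic function is shift invariant;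
  this makes the L2[0,1]-norm of f(t - \<tau>) independent of \<tau>.\<close>
lemma periodic_shift_nn_integral:
  fixes F :: "real \<Rightarrow> real"
  assumes per: "\<And>x. F (x + 1) = F x" and [measurable]: "F \<in> borel_measurable borel"
  shows "(\<integral>\<^sup>+t. ennreal (indicator {0..1} t * F (t - \<tau>)) \<partial>lborel)
       = (\<integral>\<^sup>+t. ennreal (indicator {0..1} t * F t) \<partial>lborel)"
proof -
  define G where "G = (\<lambda>x. ennreal (F x))"
  have Gper: "G (x + 1) = G x" for x using per by (simp add: G_def)
  have [measurable]: "G \<in> borel_measurable borel" unfolding G_def by measurable
  have half_open: "(\<integral>\<^sup>+t. ennreal (indicator {0..1} t * F (t - c)) \<partial>lborel)
      = (\<integral>\<^sup>+t. indicator {0..<1} t * G (t - c) \<partial>lborel)" for c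
  proof (rule nn_integral_cong_AE)
    show "AE t in lborel. ennreal (indicator {0..1} t * F (t - c)) = indicator {0..<1} t * G (t - c)"
      using AE_lborel_singleton[of 1] by eventually_elim (auto simp: indicator_def G_def)
  qed
  have "(\<integral>\<^sup>+t. indicator {0..<1} t * G (t - \<tau>) \<partial>lborel)
      = (\<integral>\<^sup>+x. indicator {0..<1} (\<tau> + 1 * x) * G (\<tau> + 1 * x - \<tau>) \<partial>lborel)"
    by (subst nn_integral_real_affine[where c=1 and t=\<tau>]) auto
  also have "\<dots> = (\<integral>\<^sup>+x. indicator {-\<tau>..<-\<tau>+1} x * G x \<partial>lborel)"
    by (intro nn_integral_cong) (auto simp: indicator_def)
  also have "\<dots> = (\<integral>\<^sup>+x. indicator {0..<1} x * G x \<partial>lborel)"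
    by (rule periodic_window_nn_integral[of G]) (auto simp: Gper)
  finally show ?thesis using half_open[of \<tau>] half_open[of 0] by simp
qed

section \<open>Averaging over the shift: Jensen and Markov\<close>

lemma jensen_exp:
  fixes g \<phi> :: "real \<Rightarrow> real"
  assumes [measurable]: "g \<in> borel_measurable lborel" "\<phi> \<in> borel_measurable lborel"
    and g0: "\<And>x. 0 \<le> g x" and gi: "integrable lborel g" and g1: "integral\<^sup>L lborel g = 1"
    and \<phi>0: "\<And>x. 0 \<le> \<phi> x"
    and m: "ennreal m \<le> (\<integral>\<^sup>+x. ennreal (g x * \<phi> x) \<partial>lborel)"
  shows "ennreal (exp m) \<le> (\<integral>\<^sup>+x. ennreal (g x * exp (\<phi> x)) \<partial>lborel)"
proof (cases "(\<integral>\<^sup>+x. ennreal (g x * exp (\<phi> x)) \<partial>lborel) = \<top>")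
  case True then show ?thesis by simp
next
  case False
  have ie: "integrable lborel (\<lambda>x. g x * exp (\<phi> x))"
    using False g0 by (subst integrable_iff_bounded) (auto simp: top.not_eq_extremum)
  have "g x * \<phi> x \<le> g x * exp (\<phi> x)" for x
  proof -
    have "\<phi> x \<le> exp (\<phi> x)" using exp_ge_add_one_self[of "\<phi> x"] by linarith
    then show ?thesis using g0[of x] by (intro mult_left_mono) auto
  qed
  then have ip: "integrable lborel (\<lambda>x. g x * \<phi> x)"
    by (intro Bochner_Integration.integrable_bound[OF ie]) (use g0 \<phi>0 in auto)
  have "(\<integral>\<^sup>+x. ennreal (g x * \<phi> x) \<partial>lborel) = ennreal (\<integral>x. g x * \<phi> x \<partial>lborel)"
    using ip g0 \<phi>0 by (intro nn_integral_eq_integral) auto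
  moreover have "0 \<le> (\<integral>x. g x * \<phi> x \<partial>lborel)"
    using g0 \<phi>0 by (intro integral_nonneg_AE) auto
  ultimately have mle: "m \<le> (\<integral>x. g x * \<phi> x \<partial>lborel)"
    using m by (cases "m \<le> 0") (auto simp: ennreal_le_iff)
  text \<open>The tangent line of exp at m lies below exp.\<close>
  have tangent: "exp m * (1 - m) * g x + exp m * (g x * \<phi> x) \<le> g x * exp (\<phi> x)" for x
  proof -
    have "exp m * (1 + (\<phi> x - m)) \<le> exp m * exp (\<phi> x - m)"
      using exp_ge_add_one_self[of "\<phi> x - m"] by simp
    also have "\<dots> = exp (\<phi> x)" by (simp add: exp_diff)
    finally have "g x * (exp m * (1 + (\<phi> x - m))) \<le> g x * exp (\<phi> x)"
      using g0[of x] by (intro mult_left_mono) auto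
    then show ?thesis by (simp add: algebra_simps)
  qed
  have "exp m \<le> exp m * (1 - m) * 1 + exp m * (\<integral>x. g x * \<phi> x \<partial>lborel)"
    using mle by (simp add: algebra_simps)
  also have "\<dots> = (\<integral>x. exp m * (1 - m) * g x + exp m * (g x * \<phi> x) \<partial>lborel)"
    using gi ip g1 by simp
  also have "\<dots> \<le> (\<integral>x. g x * exp (\<phi> x) \<partial>lborel)"
    using gi ip ie tangent by (intro integral_mono) auto
  finally have "ennreal (exp m) \<le> ennreal (\<integral>x. g x * exp (\<phi> x) \<partial>lborel)" by (rule ennreal_leI)
  also have "\<dots> = (\<integral>\<^sup>+x. ennreal (g x * exp (\<phi> x)) \<partial>lborel)"
    using ie g0 by (intro nn_integral_eq_integral[symmetric]) auto
  finally show ?thesis .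
qed

lemma jensen_exp_scaled:
  fixes g q :: "real \<Rightarrow> real"
  assumes g_meas: "g \<in> borel_measurable lborel" and g_nonneg: "\<And>x. 0 \<le> g x"
    and g_int: "integrable lborel g" and g_one: "integral\<^sup>L lborel g = 1"
    and q_meas: "q \<in> borel_measurable lborel" and q_nonneg: "\<And>x. 0 \<le> q x"
    and \<mu>: "0 \<le> \<mu>" and t: "ennreal t \<le> (\<integral>\<^sup>+x. ennreal (g x * q x) \<partial>lborel)"
  shows "ennreal (exp (\<mu> * t)) \<le> (\<integral>\<^sup>+x. ennreal (g x * exp (\<mu> * q x)) \<partial>lborel)"
proof (rule jensen_exp[OF g_meas _ g_nonneg g_int g_one])
  have "ennreal (\<mu> * t) \<le> ennreal \<mu> * ennreal t"
  proof (cases "0 \<le> t")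
    case False
    then have "\<mu> * t \<le> 0" using \<mu> by (simp add: mult_nonneg_nonpos)
    then show ?thesis by (simp add: ennreal_neg)
  qed (use \<mu> in \<open>simp add: ennreal_mult\<close>)
  also have "\<dots> \<le> ennreal \<mu> * (\<integral>\<^sup>+x. ennreal (g x * q x) \<partial>lborel)"
    using t by (rule mult_left_mono) simp
  also have "\<dots> = (\<integral>\<^sup>+x. ennreal (g x * (\<mu> * q x)) \<partial>lborel)"
    using \<mu> g_nonneg q_nonneg g_meas q_meas
    by (subst nn_integral_cmult[symmetric]) (auto simp: ennreal_mult[symmetric] intro!: nn_integral_cong)
  finally show "ennreal (\<mu> * t) \<le> (\<integral>\<^sup>+x. ennreal (g x * (\<mu> * q x)) \<partial>lborel)" .
qed (use q_meas q_nonneg \<mu> in auto)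

text \<open>Jensen moves
  the exponential inside the average, Tonelli exchanges the integrals.\<close>
lemma mixture_chernoff:
  fixes g :: "real \<Rightarrow> real" and Q :: "real \<Rightarrow> 'a \<Rightarrow> real"
  assumes prob: "prob_space M"
    and g_meas: "g \<in> borel_measurable lborel" and g_nonneg: "\<And>x. 0 \<le> g x"
    and g_int: "integrable lborel g" and g_one: "integral\<^sup>L lborel g = 1"
    and Q_meas: "(\<lambda>(\<tau>, \<omega>). Q \<tau> \<omega>) \<in> borel_measurable (lborel \<Otimes>\<^sub>M M)"
    and Q_nonneg: "\<And>\<tau> \<omega>. 0 \<le> Q \<tau> \<omega>"
    and \<mu>: "0 \<le> \<mu>" and B: "0 \<le> B"
    and mgf: "\<And>\<tau>. (\<integral>\<^sup>+\<omega>. ennreal (exp (\<mu> * Q \<tau> \<omega>)) \<partial>M) \<le> ennreal B"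
    and event: "\<And>\<omega>. \<omega> \<in> A \<Longrightarrow> \<omega> \<in> space M \<and> ennreal t \<le> (\<integral>\<^sup>+\<tau>. ennreal (g \<tau> * Q \<tau> \<omega>) \<partial>lborel)"
  shows "measure M A \<le> exp (- \<mu> * t) * B"
proof -
  interpret prob_space M by fact
  interpret P: pair_sigma_finite lborel M ..
  define c where "c = exp (- \<mu> * t)"
  define H where "H \<tau> \<omega> = ennreal (c * (g \<tau> * exp (\<mu> * Q \<tau> \<omega>)))" for \<tau> \<omega>
  have Q_pair: "(\<lambda>x. Q (fst x) (snd x)) \<in> borel_measurable (lborel \<Otimes>\<^sub>M M)"
    using Q_meas by (simp add: split_beta')
  have H_meas: "(\<lambda>x. H (fst x) (snd x)) \<in> borel_measurable (lborel \<Otimes>\<^sub>M M)"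
    unfolding H_def using Q_pair g_meas by measurable
  text \<open>Markov's inequality combined with Jensen: on A, 1 \<le> e^(-\<mu>t) \<integral> g e^(\<mu>Q).\<close>
  have markov: "indicator A \<omega> \<le> (\<integral>\<^sup>+\<tau>. H \<tau> \<omega> \<partial>lborel)" for \<omega>
  proof (cases "\<omega> \<in> A")
    case True
    then have \<omega>: "\<omega> \<in> space M" and t: "ennreal t \<le> (\<integral>\<^sup>+\<tau>. ennreal (g \<tau> * Q \<tau> \<omega>) \<partial>lborel)"
      using event by auto
    have [measurable]: "(\<lambda>\<tau>. Q \<tau> \<omega>) \<in> borel_measurable lborel"
      using measurable_compose[OF measurable_Pair2'[OF \<omega>] Q_pair] by simp
    have "ennreal (exp (\<mu> * t)) \<le> (\<integral>\<^sup>+\<tau>. ennreal (g \<tau> * exp (\<mu> * Q \<tau> \<omega>)) \<partial>lborel)"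
      using g_meas g_nonneg g_int g_one Q_nonneg \<mu> t by (intro jensen_exp_scaled) auto
    then have "ennreal c * ennreal (exp (\<mu> * t))
        \<le> ennreal c * (\<integral>\<^sup>+\<tau>. ennreal (g \<tau> * exp (\<mu> * Q \<tau> \<omega>)) \<partial>lborel)"
      by (rule mult_left_mono) simp
    also have "\<dots> = (\<integral>\<^sup>+\<tau>. H \<tau> \<omega> \<partial>lborel)"
      unfolding H_def c_def using g_nonneg g_meas
      by (subst nn_integral_cmult[symmetric]) (auto simp: ennreal_mult[symmetric] intro!: nn_integral_cong)
    finally show ?thesis
      using True by (simp add: c_def ennreal_mult[symmetric] mult_exp_exp)
  qed simp
  have "ennreal (measure M A) \<le> ennreal (c * B)"
  proof (cases "A \<in> sets M")
    case False then show ?thesis by (simp add: measure_notin_sets)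
  next
    case True
    have "ennreal (measure M A) = (\<integral>\<^sup>+\<omega>. indicator A \<omega> \<partial>M)"
      using True by (simp add: emeasure_eq_measure[symmetric])
    also have "\<dots> \<le> (\<integral>\<^sup>+\<omega>. (\<integral>\<^sup>+\<tau>. H \<tau> \<omega> \<partial>lborel) \<partial>M)"
      by (intro nn_integral_mono markov)
    also have "\<dots> = (\<integral>\<^sup>+\<tau>. (\<integral>\<^sup>+\<omega>. H \<tau> \<omega> \<partial>M) \<partial>lborel)"
      by (rule P.Fubini') (use H_meas in \<open>simp add: split_beta'\<close>)
    also have "\<dots> \<le> (\<integral>\<^sup>+\<tau>. ennreal (c * B) * ennreal (g \<tau>) \<partial>lborel)"
    proof (intro nn_integral_mono)
      fix \<tau>
      have "(\<lambda>\<omega>. Q \<tau> \<omega>) \<in> borel_measurable M"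
        using measurable_compose[OF measurable_Pair1'[of \<tau> lborel M] Q_pair] by simp
      then have "(\<integral>\<^sup>+\<omega>. H \<tau> \<omega> \<partial>M) = ennreal (c * g \<tau>) * (\<integral>\<^sup>+\<omega>. ennreal (exp (\<mu> * Q \<tau> \<omega>)) \<partial>M)"
        unfolding H_def using g_nonneg[of \<tau>]
        by (subst nn_integral_cmult[symmetric]) (auto simp: c_def ennreal_mult[symmetric] mult.assoc)
      also have "\<dots> \<le> ennreal (c * g \<tau>) * ennreal B"
        by (intro mult_left_mono mgf) simp
      finally show "(\<integral>\<^sup>+\<omega>. H \<tau> \<omega> \<partial>M) \<le> ennreal (c * B) * ennreal (g \<tau>)"
        using g_nonneg[of \<tau>] B by (simp add: c_def ennreal_mult[symmetric] mult_ac)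
    qed
    also have "\<dots> = ennreal (c * B) * (\<integral>\<^sup>+\<tau>. ennreal (g \<tau>) \<partial>lborel)"
      using g_meas by (intro nn_integral_cmult) auto
    also have "(\<integral>\<^sup>+\<tau>. ennreal (g \<tau>) \<partial>lborel) = 1"
      using g_int g_one g_nonneg by (subst nn_integral_eq_integral) auto
    finally show ?thesis by simp
  qed
  then show ?thesis using B by (simp add: c_def ennreal_le_iff)
qed

text \<open>A finite sum of Lebesgue integrals of nonnegative functions is bounded by the
  nonnegative integral of the sum (the Lebesgue integral of a non-integrable function
  is 0).\<close>
lemma sum_integral_le_nn_integral:
  fixes f :: "'i \<Rightarrow> 'b \<Rightarrow> real"
  assumes fin: "finite I" and f_meas: "\<And>i. i \<in> I \<Longrightarrow> f i \<in> borel_measurable N"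
    and f_nonneg: "\<And>i x. i \<in> I \<Longrightarrow> 0 \<le> f i x"
  shows "ennreal (\<Sum>i\<in>I. \<integral>x. f i x \<partial>N) \<le> (\<integral>\<^sup>+x. ennreal (\<Sum>i\<in>I. f i x) \<partial>N)"
proof -
  have single: "ennreal (\<integral>x. f i x \<partial>N) \<le> (\<integral>\<^sup>+x. ennreal (f i x) \<partial>N)" if "i \<in> I" for i
  proof (cases "integrable N (f i)")
    case True then show ?thesis using f_nonneg[OF that] by (subst nn_integral_eq_integral) auto
  next
    case False then show ?thesis by (simp add: not_integrable_integral_eq)
  qed
  have "ennreal (\<Sum>i\<in>I. \<integral>x. f i x \<partial>N) = (\<Sum>i\<in>I. ennreal (\<integral>x. f i x \<partial>N))"
    using f_nonneg by (intro sum_ennreal[symmetric] integral_nonneg_AE) auto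
  also have "\<dots> \<le> (\<Sum>i\<in>I. \<integral>\<^sup>+x. ennreal (f i x) \<partial>N)"
    by (intro sum_mono single)
  also have "\<dots> = (\<integral>\<^sup>+x. (\<Sum>i\<in>I. ennreal (f i x)) \<partial>N)"
    using f_meas by (intro nn_integral_sum[symmetric]) auto
  also have "\<dots> = (\<integral>\<^sup>+x. ennreal (\<Sum>i\<in>I. f i x) \<partial>N)"
    using f_nonneg by (intro nn_integral_cong sum_ennreal) auto
  finally show ?thesis .
qed

lemma shifted_ito_chernoff:
  fixes M :: "'a measure" and g f :: "real \<Rightarrow> real"
    and W :: "'i \<Rightarrow> real \<Rightarrow> 'a \<Rightarrow> real" and X :: "'i \<Rightarrow> real \<Rightarrow> 'a \<Rightarrow> real"
  assumes prob: "prob_space M" and fin: "finite I"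
    and g_meas: "g \<in> borel_measurable lborel" and g_nonneg: "\<And>x. 0 \<le> g x"
    and g_int: "integrable lborel g" and g_one: "integral\<^sup>L lborel g = 1"
    and BM: "\<And>i. i \<in> I \<Longrightarrow> std_brownian_motion M (W i)"
    and indep: "prob_space.indep_vars M (\<lambda>_. Pi\<^sub>M {0..1} (\<lambda>_. borel))
                  (\<lambda>i \<omega>. restrict (\<lambda>t. W i t \<omega>) {0..1}) I"
    and f_meas: "f \<in> borel_measurable borel" and f_per: "\<And>x. f (x + 1) = f x"
    and S_nn: "(\<integral>\<^sup>+t. ennreal (indicator {0..1} t * (f t)\<^sup>2) \<partial>lborel) = ennreal S" and S0: "0 \<le> S"
    and X_meas: "\<And>i. i \<in> I \<Longrightarrow> (\<lambda>(\<tau>, \<omega>). X i \<tau> \<omega>) \<in> borel_measurable (lborel \<Otimes>\<^sub>M M)"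
    and X_ito: "\<And>i \<tau>. i \<in> I \<Longrightarrow> is_ito_integral M (W i) (\<lambda>t. f (t - \<tau>)) (X i \<tau>)"
    and \<mu>: "0 \<le> \<mu>" "2 * \<mu> * S < 1"
  shows "measure M {\<omega> \<in> space M. t \<le> (\<Sum>i\<in>I. \<integral>\<tau>. g \<tau> * (X i \<tau> \<omega>)\<^sup>2 \<partial>lborel)}
       \<le> exp (- \<mu> * t) * (1 / sqrt (1 - 2 * \<mu> * S)) ^ card I"
proof -
  define Q where "Q \<tau> \<omega> = (\<Sum>i\<in>I. (X i \<tau> \<omega>)\<^sup>2)" for \<tau> \<omega>
  text \<open>By periodicity every shift f(t - \<tau>) has squared L2[0,1]-norm S.\<close>
  have mgf: "(\<integral>\<^sup>+\<omega>. ennreal (exp (\<mu> * Q \<tau> \<omega>)) \<partial>M) \<le> ennreal ((1 / sqrt (1 - 2 * \<mu> * S)) ^ card I)"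
    for \<tau>
  proof -
    have "(\<integral>\<^sup>+t. ennreal (indicator {0..1} t * (f (t - \<tau>))\<^sup>2) \<partial>lborel) = ennreal S"
      using periodic_shift_nn_integral[of "\<lambda>x. (f x)\<^sup>2" \<tau>] f_per f_meas S_nn by simp
    then show ?thesis unfolding Q_def
      using ito_sq_sum_mgf[OF prob fin BM indep, of "\<lambda>t. f (t - \<tau>)" S "\<lambda>i. X i \<tau>" \<mu>]
        X_ito f_meas S0 \<mu> by simp
  qed
  have event: "ennreal t \<le> (\<integral>\<^sup>+\<tau>. ennreal (g \<tau> * Q \<tau> \<omega>) \<partial>lborel)"
    if \<omega>: "\<omega> \<in> space M" and t: "t \<le> (\<Sum>i\<in>I. \<integral>\<tau>. g \<tau> * (X i \<tau> \<omega>)\<^sup>2 \<partial>lborel)" for \<omega>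
  proof -
    have [measurable]: "(\<lambda>\<tau>. X i \<tau> \<omega>) \<in> borel_measurable lborel" if "i \<in> I" for i
      using measurable_compose[OF measurable_Pair2'[OF \<omega>] X_meas[OF that]] by simp
    have "ennreal t \<le> ennreal (\<Sum>i\<in>I. \<integral>\<tau>. g \<tau> * (X i \<tau> \<omega>)\<^sup>2 \<partial>lborel)"
      using t by (rule ennreal_leI)
    also have "\<dots> \<le> (\<integral>\<^sup>+\<tau>. ennreal (\<Sum>i\<in>I. g \<tau> * (X i \<tau> \<omega>)\<^sup>2) \<partial>lborel)"
      using fin g_meas g_nonneg by (intro sum_integral_le_nn_integral) auto
    finally show ?thesis by (simp add: Q_def sum_distrib_left)
  qed
  show ?thesis
  proof (rule mixture_chernoff[OF prob g_meas g_nonneg g_int g_one, where Q=Q])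
    show "(\<lambda>(\<tau>, \<omega>). Q \<tau> \<omega>) \<in> borel_measurable (lborel \<Otimes>\<^sub>M M)"
      unfolding Q_def using X_meas by (simp add: split_beta' borel_measurable_sum)
  qed (use mgf event \<mu> in \<open>auto simp: Q_def intro: sum_nonneg\<close>)
qed

theorem lemma5:
  fixes M :: "'a measure"
    and g f :: "real \<Rightarrow> real"
    and W :: "nat \<Rightarrow> real \<Rightarrow> 'a \<Rightarrow> real"
    and X :: "nat \<Rightarrow> real \<Rightarrow> 'a \<Rightarrow> real"
    and n :: nat and \<alpha> :: real
  assumes prob: "prob_space M"
    and g_meas: "g \<in> borel_measurable lborel"
    and g_nonneg: "\<And>x. 0 \<le> g x"
    and g_int: "integrable lborel g"
    and g_one: "integral\<^sup>L lborel g = 1"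
    and BM: "\<And>i. i \<in> {1..n} \<Longrightarrow> std_brownian_motion M (W i)"
    and indep: "prob_space.indep_vars M (\<lambda>_. Pi\<^sub>M {0..1} (\<lambda>_. borel))
                  (\<lambda>i \<omega>. restrict (\<lambda>t. W i t \<omega>) {0..1}) {1..n}"
    and f_meas: "f \<in> borel_measurable lborel"
    and f_L2: "set_integrable lborel {0..1} (\<lambda>x. (f x)\<^sup>2)"
    and f_per: "\<And>x. f (x + 1) = f x"
    and X_meas: "\<And>i. i \<in> {1..n} \<Longrightarrow>
                   (\<lambda>(\<tau>, \<omega>). X i \<tau> \<omega>) \<in> borel_measurable (lborel \<Otimes>\<^sub>M M)"
    and X_ito: "\<And>i \<tau>. i \<in> {1..n} \<Longrightarrow> is_ito_integral M (W i) (\<lambda>t. f (t - \<tau>)) (X i \<tau>)"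
    and \<alpha>_pos: "\<alpha> > 0"
  shows "measure M {\<omega> \<in> space M.
            (1/2) * (\<Sum>i=1..n. \<integral>\<tau>. g \<tau> * (X i \<tau> \<omega>)\<^sup>2 \<partial>lborel)
              - real n / 2 * (\<integral>x\<in>{0..1}. (f x)\<^sup>2 \<partial>lborel) \<ge> \<alpha>}
         \<le> exp (- \<alpha>\<^sup>2 / (real n * (\<integral>x\<in>{0..1}. (f x)\<^sup>2 \<partial>lborel)\<^sup>2
                        + 2 * \<alpha> * (\<integral>x\<in>{0..1}. (f x)\<^sup>2 \<partial>lborel)))"
proof -
  define S where "S = (\<integral>x\<in>{0..1}. (f x)\<^sup>2 \<partial>lborel)"
  have S_nn: "(\<integral>\<^sup>+t. ennreal (indicator {0..1} t * (f t)\<^sup>2) \<partial>lborel) = ennreal S" and S0: "0 \<le> S"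
    using f_L2 unfolding S_def set_lebesgue_integral_def set_integrable_def
    by (auto intro: nn_integral_eq_integral integral_nonneg_AE)
  define E where "E = {\<omega> \<in> space M.
      (1/2) * (\<Sum>i=1..n. \<integral>\<tau>. g \<tau> * (X i \<tau> \<omega>)\<^sup>2 \<partial>lborel) - real n / 2 * S \<ge> \<alpha>}"
  have "measure M E \<le> exp (- \<alpha>\<^sup>2 / (real n * S\<^sup>2 + 2 * \<alpha> * S))"
  proof (cases "n = 0 \<or> S = 0")
    case True
    then show ?thesis using \<alpha>_pos prob_space.prob_le_1[OF prob] by (auto simp: E_def)
  next
    case False
    then have n: "0 < n" and S_pos: "0 < S" using S0 by auto
    define \<theta> where "\<theta> = 2 * \<alpha> / (real n * S\<^sup>2 + 2 * \<alpha> * S)"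
    note \<theta> = chernoff_exponent[OF n S_pos \<alpha>_pos, folded \<theta>_def]
    have "E = {\<omega> \<in> space M. 2 * \<alpha> + real n * S \<le> (\<Sum>i\<in>{1..n}. \<integral>\<tau>. g \<tau> * (X i \<tau> \<omega>)\<^sup>2 \<partial>lborel)}"
      by (auto simp: E_def)
    also have "measure M \<dots> \<le> exp (- (\<theta> / 2) * (2 * \<alpha> + real n * S)) * (1 / sqrt (1 - \<theta> * S)) ^ n"
      using shifted_ito_chernoff[OF prob _ g_meas g_nonneg g_int g_one BM indep _ f_per S_nn S0
          X_meas X_ito, of "\<theta> / 2"] f_meas \<theta>(1,2) by simp
    also have "\<dots> = exp (- \<theta> * (\<alpha> + real n * S / 2)) * (1 / sqrt (1 - \<theta> * S)) ^ n"
      by (simp add: algebra_simps)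
    also have "\<dots> \<le> exp (- \<alpha>\<^sup>2 / (real n * S\<^sup>2 + 2 * \<alpha> * S))" by (rule \<theta>(3))
    finally show ?thesis .
  qed
  then show ?thesis by (simp add: E_def S_def)
qed

end
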